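(* Let $g_1,\dots,g_N$ be unit vectors in $\mathbb{R}^3$, any three of which are linearly independent, and let $\gamma_1,\dots,\gamma_N\in\mathbb{R}$ be such that the $N$-grid they define is regular. Then the grid tiling associated with this grid has a growth form, and this growth form is the polyhedron whose vertices are the points $$\pm\frac{\upsilon_{ij}}{\Delta_{ij}},\qquad 1\le i<j\le N,$$ (i.e. the boundary of the convex hull of these points), where for pairwise distinct $i,j,k$: $h_{ij}=g_i\times g_j$, $\delta_{ijk}=\dfrac{|h_{ij}|}{|(h_{ij},g_k)|}$, $D_{ijk}=\det(g_i,g_j,g_k)$ (the determinant of the $3\times 3$ matrix with rows $g_i,g_j,g_k$), $\epsilon_{ijk}=1$ if $D_{ijk}>0$ and $\epsilon_{ijk}=-1$ if $D_{ijk}<0$, and $$\Delta_{ij}=\sum_{k\neq i,j}\frac{1}{\delta_{ijk}},\qquad \upsilon_{ij}=\sum_{k\neq i,j}\frac{\epsilon_{ijk}\,g_k}{\delta_{ijk}}.$$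
   Context: Grid construction (in $\mathbb{R}^d$, here $d=3$): given unit vectors $g_1,\dots,g_N$ and reals $\gamma_1,\dots,\gamma_N$, the $N$-grid is the union of the $N$ families of equidistant parallel planes $\{x\in\mathbb{R}^d:(x,g_i)-\gamma_i\in\mathbb{Z}\}$, $1\le i\le N$, where $(\cdot,\cdot)$ is the standard scalar product. The grid is regular if no point lies on more than $d$ of these planes. The grid decomposes $\mathbb{R}^d$ into cells (closures of connected components of the complement). Define $K_i(x)=\min\{n\in\mathbb{Z}: n\ge (x,g_i)-\gamma_i\}$ and $K(x)=\sum_{i=1}^N K_i(x)g_i$; $K$ is constant on the interior of each cell, mapping cells to a discrete set $\Lambda\subset\mathbb{R}^d$. The grid tiling is the tiling with vertex set $\Lambda$ in which two points of $\Lambda$ are joined by an edge iff the corresponding cells share a facet, and whose tiles are, for each intersection point of $d$ grid planes, the parallelepiped whose vertices are the $K$-images of the $2^d$ cells containing that point. Growth form: two tiles of a tiling of $\mathbb{R}^d$ are neighbours if their intersection has positive $(d-1)$-dimensional volume. A chain is a finite sequence of tiles with consecutive tiles neighbours; its length is the number of tiles minus one; the distance between two tiles is the minimal length of a chain joining them. Given a finite nonempty set $P_0$ of tiles, the $n$-th coordination shell $P_n$ is the set of tiles at distance exactly $n$ from $P_0$. A closed $(d-1)$-dimensional surface $F\subset\mathbb{R}^d$ is a growth form of the tiling if there exist a point $x$ and a constant $C$ such that for all $n$ the shell $P_n$ lies in the $C$-neighbourhood of $x+nF$ (this does not depend on $P_0$). *)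

theory Defs
  imports "HOL-Analysis.Analysis" "HOL-Analysis.Cross3"
begin

definition grid_set :: "(nat \<Rightarrow> real^3) \<Rightarrow> (nat \<Rightarrow> real) \<Rightarrow> nat \<Rightarrow> (real^3) set" where
  "grid_set g \<gamma> N = {x. \<exists>i\<in>{1..N}. x \<bullet> g i - \<gamma> i \<in> \<int>}"

text \<open>Indices of the plane families through the point x (a point lies on at most
  one plane of each family, since these planes are parallel and disjoint).\<close>
definition planes_through :: "(nat \<Rightarrow> real^3) \<Rightarrow> (nat \<Rightarrow> real) \<Rightarrow> nat \<Rightarrow> real^3 \<Rightarrow> nat set" where
  "planes_through g \<gamma> N x = {i\<in>{1..N}. x \<bullet> g i - \<gamma> i \<in> \<int>}"

definition regular_grid :: "(nat \<Rightarrow> real^3) \<Rightarrow> (nat \<Rightarrow> real) \<Rightarrow> nat \<Rightarrow> bool" where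
  "regular_grid g \<gamma> N \<longleftrightarrow> (\<forall>x. card (planes_through g \<gamma> N x) \<le> 3)"

definition Kmap :: "(nat \<Rightarrow> real^3) \<Rightarrow> (nat \<Rightarrow> real) \<Rightarrow> nat \<Rightarrow> real^3 \<Rightarrow> real^3" where
  "Kmap g \<gamma> N x = (\<Sum>i\<in>{1..N}. of_int \<lceil>x \<bullet> g i - \<gamma> i\<rceil> *\<^sub>R g i)"

text \<open>The tile attached to an intersection point p of grid planes: the parallelepiped
  (convex hull) whose vertices are the K-images of the cells containing p. A cell is the
  closure of a connected component of the complement of the grid; its K-image is the value
  of K at any point of that (open) component.\<close>
definition grid_tile_at :: "(nat \<Rightarrow> real^3) \<Rightarrow> (nat \<Rightarrow> real) \<Rightarrow> nat \<Rightarrow> real^3 \<Rightarrow> (real^3) set" where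
  "grid_tile_at g \<gamma> N p = convex hull
     {Kmap g \<gamma> N x | x. x \<notin> grid_set g \<gamma> N \<and>
        p \<in> closure (connected_component_set (- grid_set g \<gamma> N) x)}"

definition grid_tiles :: "(nat \<Rightarrow> real^3) \<Rightarrow> (nat \<Rightarrow> real) \<Rightarrow> nat \<Rightarrow> (real^3) set set" where
  "grid_tiles g \<gamma> N = {grid_tile_at g \<gamma> N p | p. card (planes_through g \<gamma> N p) \<ge> 3}"

text \<open>Neighbouring tiles: the intersection has positive (d-1)-dimensional volume.
  The tiles are convex, so their intersection is convex, and a convex set has positive
  (d-1)-dimensional measure iff its affine dimension is at least d-1.\<close>
definition tile_nbr :: "'a::euclidean_space set set \<Rightarrow> ('a set \<times> 'a set) set" where
  "tile_nbr \<T> = {(T, T'). T \<in> \<T> \<and> T' \<in> \<T> \<and> aff_dim (T \<inter> T') \<ge> int DIM('a) - 1}"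

definition coord_shell :: "'a::euclidean_space set set \<Rightarrow> 'a set set \<Rightarrow> nat \<Rightarrow> 'a set set" where
  "coord_shell \<T> P0 n = {T \<in> \<T>. (\<exists>T0\<in>P0. (T0, T) \<in> tile_nbr \<T> ^^ n) \<and>
       \<not> (\<exists>m<n. \<exists>T0\<in>P0. (T0, T) \<in> tile_nbr \<T> ^^ m)}"

definition is_growth_form :: "'a::euclidean_space set set \<Rightarrow> 'a set \<Rightarrow> bool" where
  "is_growth_form \<T> F \<longleftrightarrow> compact F \<and>
     (\<forall>P0. finite P0 \<and> P0 \<noteq> {} \<and> P0 \<subseteq> \<T> \<longrightarrow>
        (\<exists>x C. \<forall>n. \<forall>T\<in>coord_shell \<T> P0 n. \<forall>y\<in>T.
            \<exists>z\<in>F. dist y (x + real n *\<^sub>R z) \<le> C))"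

definition hvec :: "(nat \<Rightarrow> real^3) \<Rightarrow> nat \<Rightarrow> nat \<Rightarrow> real^3" where
  "hvec g i j = cross3 (g i) (g j)"

definition delta3 :: "(nat \<Rightarrow> real^3) \<Rightarrow> nat \<Rightarrow> nat \<Rightarrow> nat \<Rightarrow> real" where
  "delta3 g i j k = norm (hvec g i j) / \<bar>hvec g i j \<bullet> g k\<bar>"

definition Ddet :: "(nat \<Rightarrow> real^3) \<Rightarrow> nat \<Rightarrow> nat \<Rightarrow> nat \<Rightarrow> real" where
  "Ddet g i j k = det (vector [g i, g j, g k] :: real^3^3)"

definition eps3 :: "(nat \<Rightarrow> real^3) \<Rightarrow> nat \<Rightarrow> nat \<Rightarrow> nat \<Rightarrow> real" where
  "eps3 g i j k = (if Ddet g i j k > 0 then 1 else if Ddet g i j k < 0 then -1 else 0)"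

definition Delta2 :: "(nat \<Rightarrow> real^3) \<Rightarrow> nat \<Rightarrow> nat \<Rightarrow> nat \<Rightarrow> real" where
  "Delta2 g N i j = (\<Sum>k\<in>{1..N} - {i, j}. 1 / delta3 g i j k)"

definition upsilon2 :: "(nat \<Rightarrow> real^3) \<Rightarrow> nat \<Rightarrow> nat \<Rightarrow> nat \<Rightarrow> real^3" where
  "upsilon2 g N i j = (\<Sum>k\<in>{1..N} - {i, j}. (eps3 g i j k / delta3 g i j k) *\<^sub>R g k)"

definition growth_vertices :: "(nat \<Rightarrow> real^3) \<Rightarrow> nat \<Rightarrow> (real^3) set" where
  "growth_vertices g N = {s *\<^sub>R ((1 / Delta2 g N i j) *\<^sub>R upsilon2 g N i j) | s i j.
      s \<in> {1, -1} \<and> 1 \<le> i \<and> i < j \<and> j \<le> N}"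

end

theory Submission
  imports Defs
begin

text \<open>Write \<open>c\<^sub>k x = (x, g\<^sub>k) - \<gamma>\<^sub>k\<close> for the grid coordinates and \<open>\<nu> v = \<Sum>\<^sub>k |(v, g\<^sub>k)|\<close> for the grid
  norm. The tile at a vertex \<open>p\<close> of the grid lies in the parallelepiped of the points \<open>\<Sum>\<^sub>k t\<^sub>k g\<^sub>k\<close>
  with \<open>t\<^sub>k\<close> between \<open>\<lceil>c\<^sub>k p\<rceil>\<close> and \<open>\<lceil>c\<^sub>k p\<rceil> + 1\<close> if \<open>c\<^sub>k p \<in> \<int>\<close> and \<open>t\<^sub>k = \<lceil>c\<^sub>k p\<rceil>\<close> otherwise, hence
  within \<open>2N\<close> of \<open>G p - \<Sum>\<^sub>k \<gamma>\<^sub>k g\<^sub>k\<close>, where \<open>G v = \<Sum>\<^sub>k (v, g\<^sub>k) g\<^sub>k\<close>. It therefore suffices that the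
  distance between the tiles at vertices \<open>p\<close> and \<open>q\<close> is \<open>\<nu> (q - p)\<close> up to an additive constant.

  Lower bound: if two tiles share a facet, the midpoints of their coordinate intervals differ by
  at most 1 in total, because a two-dimensional subset of a box leaves at least two of its three
  free coordinates variable.
  Upper bound: walking from a vertex along a grid line crosses one plane per step, every vector
  is a nonnegative combination of total weight \<open>\<nu> v\<close> of the vertices \<open>\<plusminus>h\<^sub>i\<^sub>j / \<nu> h\<^sub>i\<^sub>j\<close> of the
  unit ball of \<open>\<nu>\<close>, and vertices within bounded distance are joined by chains of bounded length.
  So the \<open>n\<close>-th shell lies near \<open>x + n G {\<nu> = 1}\<close>, and \<open>G\<close> maps \<open>{\<nu> \<le> 1}\<close> onto the convex hull of
  the points \<open>\<plusminus>\<upsilon>\<^sub>i\<^sub>j / \<Delta>\<^sub>i\<^sub>j\<close>.\<close>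

unbundle cross3_syntax

lemma finite_pos_lower_bound:
  fixes f :: "'a \<Rightarrow> real"
  assumes "finite A" "\<forall>k\<in>A. 0 < f k"
  obtains e where "0 < e" "\<forall>k\<in>A. e \<le> f k"
proof
  show "0 < Min (insert 1 (f ` A))" using assms by (subst Min_gr_iff) auto
  show "\<forall>k\<in>A. Min (insert 1 (f ` A)) \<le> f k" using assms by (auto intro: Min_le)
qed

lemma ceiling_eq_if_between:
  fixes x c :: real
  assumes "c \<in> \<int>" "c - 1 < x" "x < c"
  shows "of_int \<lceil>x\<rceil> = c" "x \<notin> \<int>"
proof -
  obtain m where m: "c = of_int m" using assms(1) Ints_cases by blast
  show "of_int \<lceil>x\<rceil> = c" using assms(2,3) m by (simp add: ceiling_unique)
  show "x \<notin> \<int>"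
  proof
    assume "x \<in> \<int>"
    then obtain n where "x = of_int n" by (rule Ints_cases)
    with assms(2,3) m have "m - 1 < n" "n < m" by linarith+
    thus False by simp
  qed
qed

lemma Ints_succ_le_if_less:
  fixes a b :: real
  assumes "a \<in> \<int>" "b \<in> \<int>" "a < b"
  shows "a + 1 \<le> b"
  using assms by (auto elim!: Ints_cases)

lemma ceiling_midpoint_eq_if_no_Int_between:
  fixes a d :: real
  assumes no_Int: "\<forall>t. 0 < t \<and> t < 1 \<longrightarrow> a + t * d \<notin> \<int>" and a: "a \<notin> \<int>"
  shows "\<lceil>a + d / 2\<rceil> = \<lceil>a\<rceil>"
proof (rule ccontr)
  assume ne: "\<lceil>a + d / 2\<rceil> \<noteq> \<lceil>a\<rceil>"
  have half: "a + d / 2 \<notin> \<int>" using no_Int[rule_format, of "1/2"] by simp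
  obtain m :: int where m: "min a (a + d / 2) < of_int m" "of_int m < max a (a + d / 2)"
  proof (cases "\<lceil>a\<rceil> < \<lceil>a + d / 2\<rceil>")
    case True
    have "a < of_int \<lceil>a\<rceil>" using a by (metis Ints_of_int ceiling_correct order_le_less)
    moreover have "of_int \<lceil>a\<rceil> < a + d / 2"
      using True by (metis ceiling_less_iff less_le_not_le not_less ceiling_le_iff)
    ultimately show ?thesis using that[of "\<lceil>a\<rceil>"] by auto
  next
    case False
    hence lt: "\<lceil>a + d / 2\<rceil> < \<lceil>a\<rceil>" using ne by simp
    have "a + d / 2 < of_int \<lceil>a + d / 2\<rceil>" using half by (metis Ints_of_int ceiling_correct order_le_less)
    moreover have "of_int \<lceil>a + d / 2\<rceil> < a"
      using lt by (metis ceiling_less_iff less_le_not_le not_less ceiling_le_iff)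
    ultimately show ?thesis using that[of "\<lceil>a + d / 2\<rceil>"] by auto
  qed
  have d: "d \<noteq> 0" using m by auto
  define t where "t = (of_int m - a) / d"
  have "a + t * d = of_int m" using d by (simp add: t_def)
  moreover have "0 < t" "t < 1/2"
    using m d unfolding t_def by (auto simp: field_simps min_def max_def split: if_splits)
  ultimately show False using no_Int[rule_format, of t] by auto
qed

lemma ceiling_midpoint_if_Int_no_Int_between:
  fixes a d :: real
  assumes no_Int: "\<forall>t. 0 < t \<and> t < 1 \<longrightarrow> a + t * d \<notin> \<int>" and a: "a \<in> \<int>"
  shows "of_int \<lceil>a + d / 2\<rceil> - a \<in> {0, 1}"
proof -
  have d: "d \<noteq> 0" using no_Int[rule_format, of "1/2"] a by auto
  show ?thesis
  proof (cases "d > 0")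
    case True
    have "d / 2 < 1"
    proof (rule ccontr)
      assume "\<not> d / 2 < 1"
      hence "0 < 1 / d" "1 / d < 1" using True by (auto simp: field_simps)
      moreover have "a + (1 / d) * d \<in> \<int>" using True a by simp
      ultimately show False using no_Int by blast
    qed
    hence "of_int \<lceil>a + d / 2\<rceil> = a + 1" using True a by (intro ceiling_eq_if_between) auto
    thus ?thesis by simp
  next
    case False
    hence d: "d < 0" using d by simp
    have "- 1 < d / 2"
    proof (rule ccontr)
      assume "\<not> - 1 < d / 2"
      hence "0 < -1 / d" "-1 / d < 1" using d by (auto simp: field_simps)
      moreover have "a + (-1 / d) * d \<in> \<int>" using d a by (simp add: Ints_diff)
      ultimately show False using no_Int by blast
    qed
    hence "of_int \<lceil>a + d / 2\<rceil> = a" using d a by (intro ceiling_eq_if_between) auto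
    thus ?thesis by simp
  qed
qed

lemma card_Int_crossings_le:
  fixes a d :: real
  assumes "d \<noteq> 0"
  defines "T \<equiv> {t. 0 < t \<and> t < 1 \<and> a + t * d \<in> \<int>}"
  shows "finite T" "real (card T) \<le> \<bar>d\<bar> + 1"
proof -
  define lo where "lo = min a (a + d)"
  define hi where "hi = max a (a + d)"
  define M where "M = {m :: int. lo < of_int m \<and> of_int m < hi}"
  have T_sub: "T \<subseteq> (\<lambda>m. (of_int m - a) / d) ` M"
  proof
    fix t assume t: "t \<in> T"
    then obtain m where m: "a + t * d = of_int m" by (auto simp: T_def elim!: Ints_cases)
    have "0 < t" "t < 1" using t by (auto simp: T_def)
    hence "lo < a + t * d \<and> a + t * d < hi"
      using assms(1) mult_strict_right_mono[of t 1 d] mult_strict_right_mono_neg[of t 1 d]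
      by (cases "d > 0") (auto simp: lo_def hi_def mult_pos_neg)
    hence "m \<in> M" using m by (simp add: M_def)
    moreover have "t = (of_int m - a) / d" using m assms(1) by (simp add: field_simps)
    ultimately show "t \<in> (\<lambda>m. (of_int m - a) / d) ` M" by blast
  qed
  have M_sub: "M \<subseteq> {\<lfloor>lo\<rfloor> + 1 .. \<lceil>hi\<rceil> - 1}"
  proof
    fix m assume "m \<in> M"
    hence "\<lfloor>lo\<rfloor> < m" "m < \<lceil>hi\<rceil>" by (auto simp: M_def floor_less_iff less_ceiling_iff)
    thus "m \<in> {\<lfloor>lo\<rfloor> + 1 .. \<lceil>hi\<rceil> - 1}" by auto
  qed
  have finM: "finite M" using M_sub finite_subset by blast
  show "finite T" using T_sub finM by (meson finite_imageI finite_subset)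
  have "card T \<le> card M"
    using card_mono[OF finite_imageI[OF finM] T_sub] card_image_le[OF finM, of "\<lambda>m. (of_int m - a) / d"]
    by linarith
  also have "card M \<le> nat (\<lceil>hi\<rceil> - 1 - \<lfloor>lo\<rfloor>)" using card_mono[OF _ M_sub] by simp
  finally have "real (card T) \<le> real (nat (\<lceil>hi\<rceil> - 1 - \<lfloor>lo\<rfloor>))" by linarith
  also have "\<dots> \<le> hi - lo + 1"
    using ceiling_correct[of hi] floor_correct[of lo] by (simp add: lo_def hi_def) linarith
  finally show "real (card T) \<le> \<bar>d\<bar> + 1" by (simp add: lo_def hi_def)
qed

lemma triple_product_expansion:
  fixes a b c v :: "real^3"
  shows "((a \<times> b) \<bullet> c) *\<^sub>R v = (v \<bullet> a) *\<^sub>R (b \<times> c) + (v \<bullet> b) *\<^sub>R (c \<times> a) + (v \<bullet> c) *\<^sub>R (a \<times> b)"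
  unfolding vec_eq_iff forall_3 by (simp add: cross3_def inner_vec_def sum_3 algebra_simps)

lemma det_vector3_eq_triple_product: "det (vector [a, b, c] :: real^3^3) = (a \<times> b) \<bullet> c"
  by (simp add: cross3_simps)

lemma rows_vector3: "rows (vector [a, b, c] :: real^3^3) = {a, b, c}"
proof -
  have "{row i (vector [a, b, c] :: real^3^3) | i. i \<in> UNIV} = {a, b, c}"
  proof (rule set_eqI, rule iffI)
    fix x assume "x \<in> {row i (vector [a, b, c] :: real^3^3) | i. i \<in> UNIV}"
    then obtain i where "x = row i (vector [a, b, c] :: real^3^3)" by blast
    thus "x \<in> {a, b, c}" using exhaust_3[of i] by (auto simp: row_def vec_lambda_eta)
  next
    fix x assume "x \<in> {a, b, c}"
    hence "x = row 1 (vector [a, b, c] :: real^3^3) \<or> x = row 2 (vector [a, b, c] :: real^3^3)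
        \<or> x = row 3 (vector [a, b, c] :: real^3^3)"
      by (auto simp: row_def vec_lambda_eta)
    thus "x \<in> {row i (vector [a, b, c] :: real^3^3) | i. i \<in> UNIV}" by blast
  qed
  thus ?thesis by (simp add: rows_def)
qed

lemma triple_product_nonzero_if_independent:
  fixes a b c :: "real^3"
  assumes "independent {a, b, c}" "a \<noteq> b" "a \<noteq> c" "b \<noteq> c"
  shows "(a \<times> b) \<bullet> c \<noteq> 0"
proof
  assume "(a \<times> b) \<bullet> c = 0"
  hence "det (vector [a, b, c] :: real^3^3) = 0" by (simp add: det_vector3_eq_triple_product)
  hence "rank (vector [a, b, c] :: real^3^3) < 3" by (simp add: det_eq_0_rank)
  hence "dim {a, b, c} < 3" by (simp add: row_rank_def rows_vector3)
  moreover have "dim {a, b, c} = 3" using assms by (simp add: dim_eq_card_independent)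
  ultimately show False by simp
qed

lemma norm_cross_le:
  fixes a b :: "real^3"
  shows "norm (a \<times> b) \<le> norm a * norm b"
proof -
  have "(norm (a \<times> b))\<^sup>2 \<le> (norm a * norm b)\<^sup>2"
    using norm_cross_dot[of a b] by (metis le_add_same_cancel1 zero_le_power2)
  thus ?thesis by (rule power2_le_imp_le) simp
qed

lemma cramer3:
  fixes a b c :: "real^3" and \<alpha> \<beta> \<delta> :: real
  assumes D: "(a \<times> b) \<bullet> c \<noteq> 0"
  defines "x \<equiv> (1 / ((a \<times> b) \<bullet> c)) *\<^sub>R (\<alpha> *\<^sub>R (b \<times> c) + \<beta> *\<^sub>R (c \<times> a) + \<delta> *\<^sub>R (a \<times> b))"
  shows "x \<bullet> a = \<alpha>" "x \<bullet> b = \<beta>" "x \<bullet> c = \<delta>"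
proof -
  have "(b \<times> c) \<bullet> a = (a \<times> b) \<bullet> c" "(c \<times> a) \<bullet> b = (a \<times> b) \<bullet> c"
    using cross_triple[of a b c] cross_triple[of c a b] by simp_all
  thus "x \<bullet> a = \<alpha>" "x \<bullet> b = \<beta>" "x \<bullet> c = \<delta>"
    using D by (simp_all add: x_def inner_add_left dot_cross_self)
qed

lemma norm_cramer3_le:
  fixes a b c :: "real^3"
  assumes "norm a = 1" "norm b = 1" "norm c = 1"
  shows "norm ((1 / ((a \<times> b) \<bullet> c)) *\<^sub>R (\<alpha> *\<^sub>R (b \<times> c) + \<beta> *\<^sub>R (c \<times> a) + \<delta> *\<^sub>R (a \<times> b)))
         \<le> (\<bar>\<alpha>\<bar> + \<bar>\<beta>\<bar> + \<bar>\<delta>\<bar>) / \<bar>(a \<times> b) \<bullet> c\<bar>"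
proof -
  have n: "norm (b \<times> c) \<le> 1" "norm (c \<times> a) \<le> 1" "norm (a \<times> b) \<le> 1"
    using norm_cross_le[of b c] norm_cross_le[of c a] norm_cross_le[of a b] assms by simp_all
  have "norm (\<alpha> *\<^sub>R (b \<times> c) + \<beta> *\<^sub>R (c \<times> a) + \<delta> *\<^sub>R (a \<times> b))
      \<le> norm (\<alpha> *\<^sub>R (b \<times> c)) + norm (\<beta> *\<^sub>R (c \<times> a)) + norm (\<delta> *\<^sub>R (a \<times> b))"
    by (meson norm_triangle_ineq order_trans add_right_mono)
  also have "\<dots> \<le> \<bar>\<alpha>\<bar> + \<bar>\<beta>\<bar> + \<bar>\<delta>\<bar>"
    using n by (intro add_mono) (auto intro: mult_left_le)
  finally show ?thesis by (simp add: divide_right_mono)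
qed

lemma norm_le_triple_product:
  fixes a b c v :: "real^3"
  assumes "(a \<times> b) \<bullet> c \<noteq> 0" "norm a = 1" "norm b = 1" "norm c = 1"
  shows "norm v \<le> (\<bar>v \<bullet> a\<bar> + \<bar>v \<bullet> b\<bar> + \<bar>v \<bullet> c\<bar>) / \<bar>(a \<times> b) \<bullet> c\<bar>"
proof -
  have "v = (1 / ((a \<times> b) \<bullet> c)) *\<^sub>R ((v \<bullet> a) *\<^sub>R (b \<times> c) + (v \<bullet> b) *\<^sub>R (c \<times> a) + (v \<bullet> c) *\<^sub>R (a \<times> b))"
    using assms(1) by (simp flip: triple_product_expansion)
  thus ?thesis using norm_cramer3_le[OF assms(2-4)] by metis
qed

lemma eq_0_if_orthogonal_triple:
  fixes a b c v :: "real^3"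
  assumes "(a \<times> b) \<bullet> c \<noteq> 0" "v \<bullet> a = 0" "v \<bullet> b = 0" "v \<bullet> c = 0"
  shows "v = 0"
  using triple_product_expansion[of a b c v] assms by simp

lemma orthogonal_both_imp_multiple_cross:
  fixes a b v :: "real^3"
  assumes h: "a \<times> b \<noteq> 0" and "v \<bullet> a = 0" "v \<bullet> b = 0"
  shows "v = ((v \<bullet> (a \<times> b)) / ((a \<times> b) \<bullet> (a \<times> b))) *\<^sub>R (a \<times> b)"
proof -
  let ?h = "a \<times> b"
  have "?h \<times> (v \<times> ?h) = 0" using Lagrange[of v a b] assms by simp
  hence "(?h \<bullet> ?h) *\<^sub>R v = (?h \<bullet> v) *\<^sub>R ?h" using Lagrange[of ?h v ?h] by simp
  hence "v = (1 / (?h \<bullet> ?h)) *\<^sub>R ((?h \<bullet> v) *\<^sub>R ?h)" using h by (metis inner_eq_zero_iff scaleR_scaleR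
    divide_self_if nonzero_divide_eq_eq scaleR_one times_divide_eq_left)
  thus ?thesis by (simp add: inner_commute)
qed

lemma coeff_eq_if_independent2:
  fixes u1 u2 :: "'a::real_vector"
  assumes "independent {u1, u2}" "u1 \<noteq> u2" "a *\<^sub>R u1 + b *\<^sub>R u2 = a' *\<^sub>R u1 + b' *\<^sub>R u2"
  shows "a = a'"
proof (rule ccontr)
  assume ne: "a \<noteq> a'"
  have eq: "(a - a') *\<^sub>R u1 = (b' - b) *\<^sub>R u2" using assms(3) by (simp add: algebra_simps)
  have "u1 = (1 / (a - a')) *\<^sub>R ((a - a') *\<^sub>R u1)" using ne by simp
  also have "\<dots> = ((b' - b) / (a - a')) *\<^sub>R u2" unfolding eq by simp
  finally have "u1 = ((b' - b) / (a - a')) *\<^sub>R u2" .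
  hence "u1 \<in> span ({u1, u2} - {u1})" using assms(2) by (auto intro: span_mul span_base)
  thus False using assms(1) unfolding dependent_def by blast
qed

lemma aff_dim_le_1_if_subset_line:
  assumes "X \<subseteq> (+) P ` span {v :: real^3}"
  shows "aff_dim X \<le> 1"
proof -
  have "aff_dim ((+) P ` span {v}) = int (dim (span {v}))"
    by (simp add: aff_dim_translation_eq aff_dim_subspace)
  also have "dim (span {v}) \<le> 1" using dim_le_card[of "{v}" "{v}"] by (simp add: span_base)
  finally show ?thesis using aff_dim_subset[OF assms] by simp
qed

lemma aff_dim_ge_2_if_triangle:
  fixes v1 v2 :: "'a::euclidean_space"
  assumes X: "{P, P + v1, P + v2} \<subseteq> X" and ind: "independent {v1, v2}" and ne: "v1 \<noteq> v2"
  shows "2 \<le> aff_dim X"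
proof -
  have e: "{P, P + v1, P + v2} = (+) P ` {0, v1, v2}" by auto
  have "aff_dim {0, v1, v2} = int (dim {0, v1, v2})" by (rule aff_dim_zero) (auto intro: hull_inc)
  moreover have "card {v1, v2} \<le> dim {0, v1, v2}" by (rule independent_card_le_dim) (use ind in auto)
  moreover have "card {v1, v2} = 2" using ne by simp
  ultimately have "2 \<le> aff_dim {P, P + v1, P + v2}" unfolding e aff_dim_translation_eq by simp
  thus ?thesis using aff_dim_subset[OF X] by simp
qed

lemma convex_segment_point:
  assumes "convex C" "x0 \<in> C" "x1 \<in> C" "0 \<le> s" "s \<le> 1"
  shows "x0 + s *\<^sub>R (x1 - x0) \<in> C"
proof -
  have "(1 - s) *\<^sub>R x0 + s *\<^sub>R x1 \<in> C" using assms by (intro convexD) auto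
  thus ?thesis by (simp add: algebra_simps)
qed

lemma in_closure_component_if_segment_avoids:
  fixes p d :: "'a::real_normed_vector"
  assumes e: "0 < e" and avoid: "\<forall>t. 0 < t \<and> t \<le> e \<longrightarrow> p + t *\<^sub>R d \<notin> X"
  shows "p \<in> closure (connected_component_set (- X) (p + e *\<^sub>R d))"
proof -
  let ?f = "\<lambda>t. p + t *\<^sub>R d"
  have conn: "connected (?f ` {0<..e})"
    by (intro connected_continuous_image continuous_intros) (simp add: is_interval_connected)
  have sub: "?f ` {0<..e} \<subseteq> connected_component_set (- X) (p + e *\<^sub>R d)"
    by (rule connected_component_maximal[OF _ conn]) (use e avoid in auto)
  have "continuous_on (closure {0<..e}) ?f" by (intro continuous_intros)
  hence "?f ` closure {0<..e} \<subseteq> closure (?f ` {0<..e})"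
    by (rule image_closure_subset[OF _ closed_closure closure_subset])
  moreover have "p \<in> ?f ` closure {0<..e}" using e by (auto intro: image_eqI[of _ _ 0])
  ultimately show ?thesis using closure_mono[OF sub] by blast
qed

locale grid3 =
  fixes g :: "nat \<Rightarrow> real^3" and \<gamma> :: "nat \<Rightarrow> real" and N :: nat
  assumes N_ge_3: "N \<ge> 3"
    and unit: "\<forall>i\<in>{1..N}. norm (g i) = 1"
    and indep: "\<forall>i\<in>{1..N}. \<forall>j\<in>{1..N}. \<forall>k\<in>{1..N}. i \<noteq> j \<and> i \<noteq> k \<and> j \<noteq> k \<longrightarrow>
           independent {g i, g j, g k}"
    and regular: "regular_grid g \<gamma> N"
begin

abbreviation "I \<equiv> {1..N}"
abbreviation "S p \<equiv> planes_through g \<gamma> N p"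
abbreviation "grid \<equiv> grid_set g \<gamma> N"
abbreviation "Kgrid \<equiv> Kmap g \<gamma> N"
abbreviation "tile p \<equiv> grid_tile_at g \<gamma> N p"
abbreviation "tiles \<equiv> grid_tiles g \<gamma> N"
abbreviation "nbr \<equiv> tile_nbr tiles"

definition coord :: "real^3 \<Rightarrow> nat \<Rightarrow> real" where
  "coord p k = p \<bullet> g k - \<gamma> k"

definition ceil_coord :: "real^3 \<Rightarrow> nat \<Rightarrow> real" where
  "ceil_coord p k = of_int \<lceil>coord p k\<rceil>"

definition box_hi :: "real^3 \<Rightarrow> nat \<Rightarrow> real" where
  "box_hi p k = ceil_coord p k + (if k \<in> S p then 1 else 0)"

definition box_mid :: "real^3 \<Rightarrow> nat \<Rightarrow> real" where
  "box_mid p k = ceil_coord p k + (if k \<in> S p then 1/2 else 0)"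

definition box_coords :: "real^3 \<Rightarrow> (nat \<Rightarrow> real) \<Rightarrow> real^3 \<Rightarrow> bool" where
  "box_coords p t y \<longleftrightarrow> y = (\<Sum>k\<in>I. t k *\<^sub>R g k) \<and> (\<forall>k\<in>I. ceil_coord p k \<le> t k \<and> t k \<le> box_hi p k)"

definition tile_box :: "real^3 \<Rightarrow> (real^3) set" where
  "tile_box p = {y. \<exists>t. box_coords p t y}"

definition grid_vertex :: "real^3 \<Rightarrow> bool" where
  "grid_vertex p \<longleftrightarrow> 3 \<le> card (S p)"

lemma S_eq: "S p = {k\<in>I. coord p k \<in> \<int>}"
  by (simp add: planes_through_def coord_def)

lemma finite_S [simp]: "finite (S p)" and S_subset: "S p \<subseteq> I"
  by (auto simp: S_eq)

lemma card_S_le_3: "card (S p) \<le> 3"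
  using regular by (simp add: regular_grid_def)

lemma grid_vertex_card: "grid_vertex p \<Longrightarrow> card (S p) = 3"
  using card_S_le_3[of p] by (simp add: grid_vertex_def)

lemma grid_vertex_if_subset_S:
  assumes "{i, j, k} \<subseteq> S p" "i \<noteq> j" "i \<noteq> k" "j \<noteq> k"
  shows "grid_vertex p"
  using card_mono[OF finite_S assms(1)] assms(2-4) by (simp add: grid_vertex_def)

lemma norm_g: "k \<in> I \<Longrightarrow> norm (g k) = 1"
  using unit by blast

lemma g_nonzero: "k \<in> I \<Longrightarrow> g k \<noteq> 0"
  using norm_g by force

lemma grid_iff: "x \<in> grid \<longleftrightarrow> (\<exists>k\<in>I. coord x k \<in> \<int>)"
  by (simp add: grid_set_def coord_def)

lemma Kmap_eq_sum: "Kgrid x = (\<Sum>k\<in>I. ceil_coord x k *\<^sub>R g k)"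
  by (simp add: Kmap_def ceil_coord_def coord_def)

lemma coord_add: "coord (p + v) k = coord p k + v \<bullet> g k"
  by (simp add: coord_def inner_add_left)

lemma coord_diff: "coord p k - coord q k = (p - q) \<bullet> g k"
  by (simp add: coord_def inner_diff_left)

lemma ceil_coord_Int: "ceil_coord p k \<in> \<int>"
  by (simp add: ceil_coord_def)

lemma ceil_coord_bounds: "coord p k \<le> ceil_coord p k" "ceil_coord p k < coord p k + 1"
  by (simp_all add: ceil_coord_def) linarith

lemma ceil_coord_eq_if_S: "k \<in> S p \<Longrightarrow> ceil_coord p k = coord p k"
  by (auto simp: S_eq ceil_coord_def elim!: Ints_cases)

lemma coord_less_ceil_coord_if_not_S:
  assumes "k \<in> I" "k \<notin> S p"
  shows "coord p k < ceil_coord p k"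
proof -
  have "coord p k \<noteq> ceil_coord p k" using assms ceil_coord_Int[of p k] by (auto simp: S_eq)
  thus ?thesis using ceil_coord_bounds(1)[of p k] by simp
qed

lemma box_mid_near_coord: "\<bar>box_mid p k - coord p k\<bar> \<le> 1"
  using ceil_coord_bounds[of p k] by (cases "k \<in> S p") (auto simp: box_mid_def ceil_coord_eq_if_S)

lemma ceil_coord_const_on_component:
  assumes x: "x \<notin> grid" and y: "y \<in> connected_component_set (- grid) x" and k: "k \<in> I"
  shows "ceil_coord y k = ceil_coord x k"
proof -
  let ?C = "connected_component_set (- grid) x"
  have no_Int: "coord z k \<notin> \<int>" if "z \<in> ?C" for z
    using connected_component_subset[of "- grid" x] that k grid_iff by blast
  have ordered: "\<not> ceil_coord a k < ceil_coord b k" if a: "a \<in> ?C" and b: "b \<in> ?C" for a b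
  proof
    assume lt: "ceil_coord a k < ceil_coord b k"
    let ?m = "ceil_coord a k"
    have "?m < coord b k"
    proof (rule ccontr)
      assume "\<not> ?m < coord b k"
      hence "ceil_coord b k \<le> ?m"
        using ceil_coord_Int[of a k] by (auto simp: ceil_coord_def elim!: Ints_cases intro: ceiling_le)
      thus False using lt by simp
    qed
    hence "g k \<bullet> a \<le> ?m + \<gamma> k" "?m + \<gamma> k \<le> g k \<bullet> b"
      using ceil_coord_bounds(1)[of a k] by (auto simp: coord_def inner_commute)
    then obtain z where "z \<in> ?C" "g k \<bullet> z = ?m + \<gamma> k"
      using connected_ivt_hyperplane[OF connected_connected_component a b] by blast
    thus False using no_Int[of z] ceil_coord_Int[of a k] by (simp add: coord_def inner_commute)
  qed
  have "x \<in> ?C" using x by simp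
  thus ?thesis using ordered[OF _ y] ordered[OF y] by (metis linorder_neq_iff)
qed

lemma coord_bounds_on_closure_cell:
  assumes x: "x \<notin> grid" and p: "p \<in> closure (connected_component_set (- grid) x)" and k: "k \<in> I"
  shows "ceil_coord x k - 1 \<le> coord p k \<and> coord p k \<le> ceil_coord x k"
proof -
  let ?D = "{z. ceil_coord x k - 1 \<le> coord z k \<and> coord z k \<le> ceil_coord x k}"
  have "closed ?D"
    unfolding coord_def by (intro closed_Collect_conj closed_Collect_le continuous_intros)
  moreover have "connected_component_set (- grid) x \<subseteq> ?D"
  proof
    fix z assume "z \<in> connected_component_set (- grid) x"
    hence "ceil_coord z k = ceil_coord x k" by (rule ceil_coord_const_on_component[OF x _ k])
    thus "z \<in> ?D" using ceil_coord_bounds[of z k] by auto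
  qed
  ultimately have "closure (connected_component_set (- grid) x) \<subseteq> ?D"
    by (rule closure_minimal[rotated])
  thus ?thesis using p by blast
qed

lemma Kmap_in_tile_box:
  assumes x: "x \<notin> grid" and p: "p \<in> closure (connected_component_set (- grid) x)"
  shows "Kgrid x \<in> tile_box p"
proof -
  have "ceil_coord p k \<le> ceil_coord x k \<and> ceil_coord x k \<le> box_hi p k" if k: "k \<in> I" for k
  proof -
    have b: "ceil_coord x k - 1 \<le> coord p k" "coord p k \<le> ceil_coord x k"
      using coord_bounds_on_closure_cell[OF x p k] by auto
    obtain m where m: "ceil_coord x k = of_int m" using ceil_coord_Int by (auto elim!: Ints_cases)
    show ?thesis
    proof (cases "k \<in> S p")
      case True
      then obtain n where n: "coord p k = of_int n" by (auto simp: S_eq elim!: Ints_cases)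
      have "m - 1 \<le> n" "n \<le> m" using b n m by linarith+
      thus ?thesis using True m n ceil_coord_eq_if_S[OF True] by (simp add: box_hi_def)
    next
      case False
      have "coord p k \<noteq> ceil_coord x k" "coord p k \<noteq> ceil_coord x k - 1"
        using False k ceil_coord_Int[of x k] by (auto simp: S_eq)
      hence "\<lceil>coord p k\<rceil> = m" using b m by (intro ceiling_unique) auto
      thus ?thesis using False m by (simp add: box_hi_def ceil_coord_def)
    qed
  qed
  thus ?thesis unfolding tile_box_def box_coords_def Kmap_eq_sum by blast
qed

lemma convex_tile_box: "convex (tile_box p)"
proof (rule convexI)
  fix y1 y2 and u v :: real
  assume "y1 \<in> tile_box p" "y2 \<in> tile_box p" and uv: "0 \<le> u" "0 \<le> v" "u + v = 1"
  then obtain t1 t2 where t1: "box_coords p t1 y1" and t2: "box_coords p t2 y2"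
    by (auto simp: tile_box_def)
  let ?t = "\<lambda>k. u * t1 k + v * t2 k"
  have sum: "u *\<^sub>R y1 + v *\<^sub>R y2 = (\<Sum>k\<in>I. ?t k *\<^sub>R g k)"
    using t1 t2 by (simp add: box_coords_def scaleR_sum_right sum.distrib[symmetric] scaleR_add_left)
  have bounds: "ceil_coord p k \<le> ?t k \<and> ?t k \<le> box_hi p k" if k: "k \<in> I" for k
  proof -
    have "u * ceil_coord p k \<le> u * t1 k" "v * ceil_coord p k \<le> v * t2 k"
         "u * t1 k \<le> u * box_hi p k" "v * t2 k \<le> v * box_hi p k"
      using t1 t2 k uv by (auto simp: box_coords_def intro: mult_left_mono)
    moreover have "ceil_coord p k = u * ceil_coord p k + v * ceil_coord p k"
        "box_hi p k = u * box_hi p k + v * box_hi p k"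
      using uv by (simp_all add: distrib_right[symmetric])
    ultimately show ?thesis by linarith
  qed
  show "u *\<^sub>R y1 + v *\<^sub>R y2 \<in> tile_box p"
    unfolding tile_box_def box_coords_def mem_Collect_eq
    by (intro exI[where x="?t"] conjI sum ballI bounds)
qed

lemma tile_subset_tile_box: "tile p \<subseteq> tile_box p"
  unfolding grid_tile_at_def
  by (rule hull_minimal) (auto intro: Kmap_in_tile_box convex_tile_box)

lemma tile_box_cong:
  assumes "\<forall>k\<in>I. coord p k = coord q k"
  shows "tile_box p = tile_box q"
proof -
  have "S p = S q" using assms by (auto simp: S_eq)
  moreover have "\<forall>k\<in>I. ceil_coord p k = ceil_coord q k" using assms by (simp add: ceil_coord_def)
  ultimately show ?thesis unfolding tile_box_def box_coords_def box_hi_def by (metis (no_types, lifting))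
qed

lemma tile_box_near:
  assumes "y \<in> tile_box p"
  shows "norm (y - (\<Sum>k\<in>I. coord p k *\<^sub>R g k)) \<le> 2 * real N"
proof -
  obtain t where t: "box_coords p t y" using assms by (auto simp: tile_box_def)
  have "y - (\<Sum>k\<in>I. coord p k *\<^sub>R g k) = (\<Sum>k\<in>I. (t k - coord p k) *\<^sub>R g k)"
    using t by (simp add: box_coords_def sum_subtractf scaleR_diff_left)
  also have "norm \<dots> \<le> (\<Sum>k\<in>I. norm ((t k - coord p k) *\<^sub>R g k))" by (rule norm_sum)
  also have "\<dots> \<le> (\<Sum>k\<in>I. 2)"
  proof (rule sum_mono)
    fix k assume k: "k \<in> I"
    have "ceil_coord p k \<le> t k" "t k \<le> ceil_coord p k + 1"
      using t k by (auto simp: box_coords_def box_hi_def split: if_splits)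
    hence "\<bar>t k - coord p k\<bar> \<le> 2" using ceil_coord_bounds[of p k] by linarith
    thus "norm ((t k - coord p k) *\<^sub>R g k) \<le> 2" using norm_g[OF k] by simp
  qed
  finally show ?thesis by simp
qed

section \<open>Neighbouring tiles and the lower bound for their distance\<close>

lemma obtain_third_of_S:
  assumes "grid_vertex p" "i \<in> S p" "j \<in> S p" "i \<noteq> j"
  obtains c where "S p = {i, j, c}" "c \<noteq> i" "c \<noteq> j"
proof -
  have "card (S p - {i, j}) = 1"
    using grid_vertex_card[OF assms(1)] assms(2-4) by (simp add: card_Diff_subset)
  then obtain c where "S p - {i, j} = {c}" by (auto simp: card_Suc_eq)
  thus ?thesis using that assms by blast
qed

lemma box_hi_le_ceil_coord_if_coord_less:
  assumes "coord q k < coord p k"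
  shows "box_hi q k \<le> ceil_coord p k"
proof (cases "k \<in> S q")
  case True
  have "coord q k + 1 \<le> ceil_coord p k"
    using True assms ceil_coord_bounds(1)[of p k]
    by (intro Ints_succ_le_if_less) (auto simp: S_eq ceil_coord_Int)
  thus ?thesis using True by (simp add: box_hi_def ceil_coord_eq_if_S)
next
  case False
  thus ?thesis using assms by (simp add: box_hi_def ceil_coord_def ceiling_mono)
qed

lemma box_coords_bounds: "box_coords p t y \<Longrightarrow> k \<in> I \<Longrightarrow> ceil_coord p k \<le> t k \<and> t k \<le> box_hi p k"
  by (simp add: box_coords_def)

lemma box_coords_not_S: "box_coords p t y \<Longrightarrow> k \<in> I \<Longrightarrow> k \<notin> S p \<Longrightarrow> t k = ceil_coord p k"
  by (force simp: box_coords_def box_hi_def)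

lemma box_coords_eq_if_coord_ne:
  assumes t: "box_coords p t y" and t': "box_coords q t' y" and k: "k \<in> I"
    and ne: "coord p k \<noteq> coord q k"
  shows "t k = t' k"
proof -
  \<comment> \<open>The summands are nonnegative because the two boxes lie on opposite sides of each plane
    separating p from q, and they add up to the inner product of 0 with p - q.\<close>
  have nonneg: "0 \<le> (t l - t' l) * (coord p l - coord q l)" if l: "l \<in> I" for l
  proof (cases "coord p l" "coord q l" rule: linorder_cases)
    case greater
    thus ?thesis using box_hi_le_ceil_coord_if_coord_less[OF greater]
        box_coords_bounds[OF t l] box_coords_bounds[OF t' l] by (intro mult_nonneg_nonneg) auto
  next
    case less
    thus ?thesis using box_hi_le_ceil_coord_if_coord_less[OF less]
        box_coords_bounds[OF t l] box_coords_bounds[OF t' l] by (intro mult_nonpos_nonpos) auto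
  qed simp
  have "(\<Sum>l\<in>I. (t l - t' l) * (coord p l - coord q l)) = (p - q) \<bullet> (\<Sum>l\<in>I. (t l - t' l) *\<^sub>R g l)"
    by (simp add: coord_diff inner_sum_right)
  also have "(\<Sum>l\<in>I. (t l - t' l) *\<^sub>R g l) = 0"
    using t t' by (simp add: box_coords_def scaleR_diff_left sum_subtractf)
  finally have "(\<Sum>l\<in>I. (t l - t' l) * (coord p l - coord q l)) = 0" by simp
  hence "(t k - t' k) * (coord p k - coord q k) = 0"
    using nonneg k by (subst (asm) sum_nonneg_eq_0_iff) auto
  thus ?thesis using ne by simp
qed

definition coord_fixed :: "real^3 \<Rightarrow> (real^3) set \<Rightarrow> nat \<Rightarrow> bool" where
  "coord_fixed p X k \<longleftrightarrow> (\<exists>c. \<forall>y\<in>X. \<forall>t. box_coords p t y \<longrightarrow> t k = c)"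

lemma aff_dim_le_1_if_two_coords_fixed:
  assumes p: "grid_vertex p" and X: "X \<subseteq> tile_box p" and k12: "k1 \<in> S p" "k2 \<in> S p" "k1 \<noteq> k2"
    and "coord_fixed p X k1" "coord_fixed p X k2"
  shows "aff_dim X \<le> 1"
proof -
  obtain c1 c2 where c1: "\<forall>y\<in>X. \<forall>t. box_coords p t y \<longrightarrow> t k1 = c1"
    and c2: "\<forall>y\<in>X. \<forall>t. box_coords p t y \<longrightarrow> t k2 = c2"
    using assms(6,7) by (auto simp: coord_fixed_def)
  obtain k3 where k3: "S p = {k1, k2, k3}" "k3 \<noteq> k1" "k3 \<noteq> k2"
    using obtain_third_of_S[OF p k12] .
  let ?P = "(\<Sum>k\<in>I - S p. ceil_coord p k *\<^sub>R g k) + c1 *\<^sub>R g k1 + c2 *\<^sub>R g k2"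
  have "X \<subseteq> (+) ?P ` span {g k3}"
  proof
    fix y assume y: "y \<in> X"
    then obtain t where t: "box_coords p t y" using X by (auto simp: tile_box_def)
    have "y = (\<Sum>k\<in>I - S p. t k *\<^sub>R g k) + (\<Sum>k\<in>S p. t k *\<^sub>R g k)"
      using t S_subset[of p] by (simp add: box_coords_def sum.subset_diff)
    also have "(\<Sum>k\<in>I - S p. t k *\<^sub>R g k) = (\<Sum>k\<in>I - S p. ceil_coord p k *\<^sub>R g k)"
      using box_coords_not_S[OF t] by (intro sum.cong) auto
    also have "(\<Sum>k\<in>S p. t k *\<^sub>R g k) = c1 *\<^sub>R g k1 + c2 *\<^sub>R g k2 + t k3 *\<^sub>R g k3"
      using k3 k12 c1 c2 y t by simp
    finally have "y = ?P + t k3 *\<^sub>R g k3" by (simp add: algebra_simps)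
    thus "y \<in> (+) ?P ` span {g k3}" by (auto intro: span_mul span_base)
  qed
  thus ?thesis by (rule aff_dim_le_1_if_subset_line)
qed

lemma box_mid_diff_if_only_left_S:
  assumes X: "X \<subseteq> tile_box p" "X \<subseteq> tile_box q" "y0 \<in> X" and k: "k \<in> S p" "k \<notin> S q"
  shows "coord_fixed p X k" "\<bar>box_mid p k - box_mid q k\<bar> \<le> 1/2"
proof -
  have kI: "k \<in> I" using k S_subset by blast
  have ne: "coord p k \<noteq> coord q k" using k kI by (auto simp: S_eq)
  have eq: "t k = ceil_coord q k" if y: "y \<in> X" and t: "box_coords p t y" for y t
  proof -
    obtain t' where t': "box_coords q t' y" using y X by (auto simp: tile_box_def)
    show ?thesis
      using box_coords_eq_if_coord_ne[OF t t' kI ne] box_coords_not_S[OF t' kI k(2)] by simp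
  qed
  show "coord_fixed p X k" unfolding coord_fixed_def using eq by blast
  obtain t0 where t0: "box_coords p t0 y0" using X by (auto simp: tile_box_def)
  have "ceil_coord p k \<le> ceil_coord q k" "ceil_coord q k \<le> ceil_coord p k + 1"
    using box_coords_bounds[OF t0 kI] eq[OF X(3) t0] k by (auto simp: box_hi_def)
  thus "\<bar>box_mid p k - box_mid q k\<bar> \<le> 1/2"
    using Ints_succ_le_if_less[OF ceil_coord_Int ceil_coord_Int, of p k q k] k
    by (cases "ceil_coord p k < ceil_coord q k") (auto simp: box_mid_def)
qed

lemma box_mid_diff_if_both_S:
  assumes X: "X \<subseteq> tile_box p" "X \<subseteq> tile_box q" "y0 \<in> X" and k: "k \<in> S p" "k \<in> S q"
    and ne: "ceil_coord p k \<noteq> ceil_coord q k"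
  shows "coord_fixed p X k" "\<bar>box_mid p k - box_mid q k\<bar> \<le> 1"
proof -
  have kI: "k \<in> I" using k S_subset by blast
  have ne': "coord p k \<noteq> coord q k" using ne k by (simp add: ceil_coord_eq_if_S)
  have Ints: "ceil_coord p k \<in> \<int>" "ceil_coord q k \<in> \<int>" by (simp_all add: ceil_coord_Int)
  have bounds: "ceil_coord p k \<le> t k" "t k \<le> ceil_coord p k + 1"
      "ceil_coord q k \<le> t k" "t k \<le> ceil_coord q k + 1"
    if y: "y \<in> X" and t: "box_coords p t y" for y t
  proof -
    obtain t' where t': "box_coords q t' y" using y X by (auto simp: tile_box_def)
    show "ceil_coord p k \<le> t k" "t k \<le> ceil_coord p k + 1"
      "ceil_coord q k \<le> t k" "t k \<le> ceil_coord q k + 1"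
      using box_coords_eq_if_coord_ne[OF t t' kI ne'] box_coords_bounds[OF t kI]
        box_coords_bounds[OF t' kI] k by (auto simp: box_hi_def)
  qed
  have "t k = max (ceil_coord p k) (ceil_coord q k)" if "y \<in> X" "box_coords p t y" for y t
    using bounds[OF that] ne Ints_succ_le_if_less[OF Ints] Ints_succ_le_if_less[OF Ints(2,1)]
    by (cases "ceil_coord p k < ceil_coord q k") (auto simp: max_def)
  thus "coord_fixed p X k" unfolding coord_fixed_def by blast
  obtain t0 where t0: "box_coords p t0 y0" using X by (auto simp: tile_box_def)
  show "\<bar>box_mid p k - box_mid q k\<bar> \<le> 1"
    using bounds[OF X(3) t0] k by (auto simp: box_mid_def)
qed

lemma box_mid_eq_if_same_S:
  assumes X: "X \<subseteq> tile_box p" "X \<subseteq> tile_box q" "y0 \<in> X" and k: "k \<in> I"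
    and S: "k \<in> S p \<longleftrightarrow> k \<in> S q" and ceil: "k \<in> S p \<Longrightarrow> ceil_coord p k = ceil_coord q k"
  shows "box_mid p k = box_mid q k"
proof (cases "k \<in> S p")
  case True
  thus ?thesis using S ceil by (simp add: box_mid_def)
next
  case False
  have "ceil_coord p k = ceil_coord q k"
  proof (cases "coord p k = coord q k")
    case True
    thus ?thesis by (simp add: ceil_coord_def)
  next
    case ne: False
    obtain t where t: "box_coords p t y0" using X by (auto simp: tile_box_def)
    obtain t' where t': "box_coords q t' y0" using X by (auto simp: tile_box_def)
    show ?thesis
      using box_coords_eq_if_coord_ne[OF t t' k ne] box_coords_not_S[OF t k False]
        box_coords_not_S[OF t' k] False S by simp
  qed
  thus ?thesis using False S by (simp add: box_mid_def)
qed

lemma box_mid_dist_le_1_if_common_plane: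
  assumes p: "grid_vertex p" and q: "grid_vertex q" and X: "X \<subseteq> tile_box p" "X \<subseteq> tile_box q"
    and dim: "2 \<le> aff_dim X"
  shows "(\<Sum>k\<in>I. \<bar>box_mid p k - box_mid q k\<bar>) \<le> 1"
proof -
  obtain y0 where y0: "y0 \<in> X" using dim by fastforce
  define A where "A = S p - S q"
  define B where "B = S q - S p"
  define E where "E = {k \<in> S p \<inter> S q. ceil_coord p k \<noteq> ceil_coord q k}"
  have sub: "A \<subseteq> I" "B \<subseteq> I" "E \<subseteq> I" and fin: "finite A" "finite B" "finite E"
    using S_subset[of p] S_subset[of q] by (auto simp: A_def B_def E_def)
  have "\<bar>box_mid p k - box_mid q k\<bar>
      \<le> (if k \<in> A then 1/2 else 0) + (if k \<in> B then 1/2 else 0) + (if k \<in> E then 1 else 0)"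
    if k: "k \<in> I" for k
    using box_mid_diff_if_only_left_S(2)[OF X y0, of k] box_mid_diff_if_only_left_S(2)[OF X(2,1) y0, of k]
      box_mid_diff_if_both_S(2)[OF X y0, of k] box_mid_eq_if_same_S[OF X y0 k]
    by (auto simp: A_def B_def E_def abs_minus_commute)
  hence "(\<Sum>k\<in>I. \<bar>box_mid p k - box_mid q k\<bar>)
      \<le> (\<Sum>k\<in>I. (if k \<in> A then 1/2 else 0) + (if k \<in> B then 1/2 else 0) + (if k \<in> E then 1 else 0))"
    by (rule sum_mono)
  also have "\<dots> = (\<Sum>k\<in>I. if k \<in> A then 1/2 else 0) + (\<Sum>k\<in>I. if k \<in> B then 1/2 else 0)
        + (\<Sum>k\<in>I. if k \<in> E then 1 else 0)"
    by (simp add: sum.distrib)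
  also have "\<dots> = card A / 2 + card B / 2 + card E"
    using sub by (simp add: sum.If_cases Int_absorb1 Int_absorb2)
  also have "\<dots> \<le> 1"
  proof -
    have "card A = card B"
      using grid_vertex_card[OF p] grid_vertex_card[OF q]
      by (simp add: A_def B_def card_Diff_subset_Int Int_commute)
    moreover have "card (A \<union> E) \<le> 1"
    proof (rule ccontr)
      assume "\<not> card (A \<union> E) \<le> 1"
      then obtain k1 k2 where kk: "k1 \<in> A \<union> E" "k2 \<in> A \<union> E" "k1 \<noteq> k2"
        using fin by (metis card_le_Suc0_iff_eq finite_UnI One_nat_def)
      have "coord_fixed p X k" "k \<in> S p" if "k \<in> A \<union> E" for k
        using that box_mid_diff_if_only_left_S(1)[OF X y0, of k] box_mid_diff_if_both_S(1)[OF X y0, of k]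
        by (auto simp: A_def E_def)
      thus False using aff_dim_le_1_if_two_coords_fixed[OF p X(1) _ _ kk(3)] kk dim by fastforce
    qed
    moreover have "A \<inter> E = {}" by (auto simp: A_def E_def)
    ultimately show ?thesis using fin by (simp add: card_Un_disjoint)
  qed
  finally show ?thesis .
qed

definition tile_point :: "(real^3) set \<Rightarrow> real^3" where
  "tile_point T = (SOME p. grid_vertex p \<and> T = tile p)"

lemma tiles_iff: "T \<in> tiles \<longleftrightarrow> (\<exists>p. grid_vertex p \<and> T = tile p)"
  by (auto simp: grid_tiles_def grid_vertex_def)

lemma tile_point:
  assumes "T \<in> tiles"
  shows "grid_vertex (tile_point T)" "T = tile (tile_point T)"
proof -
  have "\<exists>p. grid_vertex p \<and> T = tile p" using assms tiles_iff by blast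
  hence "grid_vertex (tile_point T) \<and> T = tile (tile_point T)" unfolding tile_point_def by (rule someI_ex)
  thus "grid_vertex (tile_point T)" "T = tile (tile_point T)" by auto
qed

lemma nbr_iff: "(A, B) \<in> nbr \<longleftrightarrow> A \<in> tiles \<and> B \<in> tiles \<and> 2 \<le> aff_dim (A \<inter> B)"
  by (simp add: tile_nbr_def)

lemma nbr_subset_tile_box:
  assumes "(A, B) \<in> nbr"
  shows "A \<inter> B \<subseteq> tile_box (tile_point A)" "A \<inter> B \<subseteq> tile_box (tile_point B)"
  using assms tile_point(2) tile_subset_tile_box unfolding nbr_iff by blast+

lemma nbr_box_mid_dist_le_1:
  assumes "(A, B) \<in> nbr"
  shows "(\<Sum>k\<in>I. \<bar>box_mid (tile_point A) k - box_mid (tile_point B) k\<bar>) \<le> 1"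
  using assms box_mid_dist_le_1_if_common_plane[OF tile_point(1) tile_point(1) nbr_subset_tile_box]
  unfolding nbr_iff by blast

lemma relpow_nbr_box_mid_dist_le:
  assumes "(A, B) \<in> nbr ^^ n"
  shows "(\<Sum>k\<in>I. \<bar>box_mid (tile_point A) k - box_mid (tile_point B) k\<bar>) \<le> real n"
  using assms
proof (induction n arbitrary: B)
  case (Suc n)
  then obtain C where C: "(A, C) \<in> nbr ^^ n" "(C, B) \<in> nbr" by auto
  have "(\<Sum>k\<in>I. \<bar>box_mid (tile_point A) k - box_mid (tile_point B) k\<bar>)
      \<le> (\<Sum>k\<in>I. \<bar>box_mid (tile_point A) k - box_mid (tile_point C) k\<bar>
               + \<bar>box_mid (tile_point C) k - box_mid (tile_point B) k\<bar>)"
    by (rule sum_mono) linarith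
  also have "\<dots> \<le> real n + 1"
    using Suc.IH[OF C(1)] nbr_box_mid_dist_le_1[OF C(2)] by (simp add: sum.distrib)
  finally show ?case by simp
qed simp

definition grid_norm :: "real^3 \<Rightarrow> real" where
  "grid_norm v = (\<Sum>k\<in>I. \<bar>v \<bullet> g k\<bar>)"

lemma grid_norm_zero [simp]: "grid_norm 0 = 0"
  by (simp add: grid_norm_def)

lemma grid_norm_nonneg: "0 \<le> grid_norm v"
  by (simp add: grid_norm_def sum_nonneg)

lemma grid_norm_scaleR: "grid_norm (c *\<^sub>R v) = \<bar>c\<bar> * grid_norm v"
  by (simp add: grid_norm_def abs_mult sum_distrib_left)

lemma grid_norm_minus: "grid_norm (- v) = grid_norm v"
  by (simp add: grid_norm_def)

lemma grid_norm_triangle: "grid_norm (v + w) \<le> grid_norm v + grid_norm w"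
  unfolding grid_norm_def by (simp add: sum.distrib[symmetric] inner_add_left sum_mono abs_triangle_ineq)

lemma grid_norm_le_norm: "grid_norm v \<le> real N * norm v"
proof -
  have "grid_norm v \<le> (\<Sum>k\<in>I. norm v)"
    unfolding grid_norm_def by (rule sum_mono) (metis Cauchy_Schwarz_ineq2 norm_g mult.right_neutral)
  thus ?thesis by simp
qed

lemma convex_grid_norm_ball: "convex {v. grid_norm v \<le> 1}"
proof (rule convexI)
  fix x y and u v :: real
  assume "x \<in> {v. grid_norm v \<le> 1}" "y \<in> {v. grid_norm v \<le> 1}" "0 \<le> u" "0 \<le> v" "u + v = 1"
  thus "u *\<^sub>R x + v *\<^sub>R y \<in> {v. grid_norm v \<le> 1}"
    using grid_norm_triangle[of "u *\<^sub>R x" "v *\<^sub>R y"] grid_norm_scaleR[of u x] grid_norm_scaleR[of v y]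
    by simp (smt (verit) mult_left_le)
qed

lemma grid_norm_le_box_mid_dist: "grid_norm (p - q) \<le> (\<Sum>k\<in>I. \<bar>box_mid p k - box_mid q k\<bar>) + 2 * real N"
proof -
  have "grid_norm (p - q) \<le> (\<Sum>k\<in>I. \<bar>box_mid p k - box_mid q k\<bar> + 2)"
    unfolding grid_norm_def
    using box_mid_near_coord[of p] box_mid_near_coord[of q] coord_diff[of p _ q]
    by (intro sum_mono) (smt (verit))
  thus ?thesis by (simp add: sum.distrib)
qed

lemma grid_norm_le_relpow:
  assumes "(A, B) \<in> nbr ^^ n"
  shows "grid_norm (tile_point B - tile_point A) \<le> real n + 2 * real N"
  using grid_norm_le_box_mid_dist[of "tile_point B" "tile_point A"] relpow_nbr_box_mid_dist_le[OF assms]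
  by (simp add: abs_minus_commute)

lemma coord_shellD:
  assumes "T \<in> coord_shell tiles P0 n"
  shows "T \<in> tiles" "\<exists>T0\<in>P0. (T0, T) \<in> nbr ^^ n"
    "\<And>m T0. m < n \<Longrightarrow> T0 \<in> P0 \<Longrightarrow> (T0, T) \<notin> nbr ^^ m"
  using assms by (auto simp: coord_shell_def)

section \<open>The grid norm ball and the growth polyhedron\<close>

lemma obtain_third_index:
  assumes "i \<in> I" "j \<in> I"
  obtains k where "k \<in> I" "k \<noteq> i" "k \<noteq> j"
proof -
  have "card I - card {i, j} \<le> card (I - {i, j})" by (rule diff_card_le_card_Diff) simp
  moreover have "card {i, j} \<le> 2" by (simp add: card_insert_if)
  ultimately have "card (I - {i, j}) \<ge> 1" using N_ge_3 by simp
  then obtain k where "k \<in> I - {i, j}" by (metis card.empty ex_in_conv not_one_le_zero)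
  thus ?thesis using that by blast
qed

lemma independent_g3:
  assumes "i \<in> I" "j \<in> I" "k \<in> I" "i \<noteq> j" "i \<noteq> k" "j \<noteq> k"
  shows "independent {g i, g j, g k}"
  using indep assms by simp

lemma independent_g2:
  assumes "i \<in> I" "j \<in> I" "i \<noteq> j"
  shows "independent {g i, g j}"
proof -
  obtain k where "k \<in> I" "k \<noteq> i" "k \<noteq> j" using obtain_third_index[OF assms(1,2)] .
  hence "independent {g i, g j, g k}" using independent_g3 assms by blast
  thus ?thesis by (rule independent_mono) auto
qed

lemma g_not_multiple:
  assumes "i \<in> I" "j \<in> I" "i \<noteq> j" "g i \<noteq> g j"
  shows "g j \<noteq> c *\<^sub>R g i"
proof
  assume e: "g j = c *\<^sub>R g i"
  obtain k where k: "k \<in> I" "k \<noteq> i" "k \<noteq> j" using obtain_third_index[OF assms(1,2)] .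
  have "g i \<in> span ({g i, g j, g k} - {g j})" using assms(4) by (auto intro: span_base)
  hence "g j \<in> span ({g i, g j, g k} - {g j})" unfolding e by (rule span_mul)
  hence "dependent {g i, g j, g k}" unfolding dependent_def by blast
  thus False using independent_g3 assms k by blast
qed

lemma cross_g_nonzero:
  assumes "i \<in> I" "j \<in> I" "i \<noteq> j" "g i \<noteq> g j"
  shows "g i \<times> g j \<noteq> 0"
  using g_not_multiple[OF assms] g_nonzero assms(1,2) by (auto simp: cross_eq_0 collinear_lemma)

lemma triple_product_g_nonzero:
  assumes "i \<in> I" "j \<in> I" "k \<in> I" "i \<noteq> j" "i \<noteq> k" "j \<noteq> k"
    and "g i \<noteq> g j" "g i \<noteq> g k" "g j \<noteq> g k"
  shows "(g i \<times> g j) \<bullet> g k \<noteq> 0"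
  using triple_product_nonzero_if_independent independent_g3 assms by blast

definition frame_op :: "real^3 \<Rightarrow> real^3" where
  "frame_op v = (\<Sum>k\<in>I. (v \<bullet> g k) *\<^sub>R g k)"

lemma linear_frame_op: "linear frame_op"
  unfolding frame_op_def linear_iff
  by (simp add: inner_add_left scaleR_add_left sum.distrib scaleR_sum_right)

lemma frame_op_scaleR: "frame_op (c *\<^sub>R v) = c *\<^sub>R frame_op v"
  using linear_frame_op by (simp add: linear_scale)

lemma norm_frame_op_le: "norm (frame_op v) \<le> grid_norm v"
  unfolding frame_op_def grid_norm_def
  by (rule order_trans[OF norm_sum]) (auto intro: sum_mono simp: norm_g)

definition ball_vertices :: "(real^3) set" where
  "ball_vertices = {s *\<^sub>R ((1 / grid_norm (g i \<times> g j)) *\<^sub>R (g i \<times> g j)) | s i j.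
      s \<in> {1, -1} \<and> 1 \<le> i \<and> i < j \<and> j \<le> N}"

lemma finite_ball_vertices: "finite ball_vertices"
proof -
  have "ball_vertices \<subseteq> (\<lambda>(s, i, j). s *\<^sub>R ((1 / grid_norm (g i \<times> g j)) *\<^sub>R (g i \<times> g j)))
      ` Sigma {1, -1} (\<lambda>_. Sigma I (\<lambda>_. I))"
    unfolding ball_vertices_def by force
  thus ?thesis by (rule finite_subset) auto
qed

lemma ball_verticesI:
  assumes "i \<in> I" "j \<in> I" "i \<noteq> j" "s \<in> {1, -1}"
  shows "s *\<^sub>R ((1 / grid_norm (g i \<times> g j)) *\<^sub>R (g i \<times> g j)) \<in> ball_vertices"
proof (cases "i < j")
  case True
  thus ?thesis unfolding ball_vertices_def mem_Collect_eq
    by (intro exI[of _ s] exI[of _ i] exI[of _ j]) (use assms in auto)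
next
  case False
  have "- s \<in> {1, -1}" using assms(4) by auto
  hence "(- s) *\<^sub>R ((1 / grid_norm (g j \<times> g i)) *\<^sub>R (g j \<times> g i)) \<in> ball_vertices"
    unfolding ball_vertices_def mem_Collect_eq
    by (intro exI[of _ "- s"] exI[of _ j] exI[of _ i]) (use assms False in auto)
  moreover have "g i \<times> g j = - (g j \<times> g i)" by (rule cross_skew)
  ultimately show ?thesis by (simp add: grid_norm_minus)
qed

lemma grid_norm_ball_vertex_le_1:
  assumes "w \<in> ball_vertices"
  shows "grid_norm w \<le> 1"
proof -
  obtain s i j where "w = s *\<^sub>R ((1 / grid_norm (g i \<times> g j)) *\<^sub>R (g i \<times> g j))" "s \<in> {1, -1}"
    using assms unfolding ball_vertices_def by blast
  thus ?thesis
    using grid_norm_nonneg[of "g i \<times> g j"]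
    by (cases "grid_norm (g i \<times> g j) = 0") (auto simp: grid_norm_scaleR)
qed

lemma uminus_ball_vertex:
  assumes "w \<in> ball_vertices"
  shows "- w \<in> ball_vertices"
proof -
  obtain s i j where w: "w = s *\<^sub>R ((1 / grid_norm (g i \<times> g j)) *\<^sub>R (g i \<times> g j))"
      "s \<in> {1, -1}" "1 \<le> i" "i < j" "j \<le> N"
    using assms unfolding ball_vertices_def by blast
  have "- w = (- s) *\<^sub>R ((1 / grid_norm (g i \<times> g j)) *\<^sub>R (g i \<times> g j))" "- s \<in> {1, -1}"
    using w(1,2) by auto
  thus ?thesis unfolding ball_vertices_def using w(3-5) by blast
qed

lemma convex_hull_ball_vertices_subset: "convex hull ball_vertices \<subseteq> {v. grid_norm v \<le> 1}"
  by (rule hull_minimal) (auto simp: grid_norm_ball_vertex_le_1 convex_grid_norm_ball)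

text \<open>With \<open>h = g i \<times> g j\<close> one has \<open>\<Delta>\<^sub>i\<^sub>j = \<nu> h / |h|\<close> and \<open>\<upsilon>\<^sub>i\<^sub>j = G h / |h|\<close>, where \<open>\<nu>\<close> is the
  grid norm and \<open>G\<close> the frame operator: the terms \<open>k = i, j\<close> vanish and
  \<open>\<epsilon>\<^sub>i\<^sub>j\<^sub>k / \<delta>\<^sub>i\<^sub>j\<^sub>k = (h \<bullet> g k) / |h|\<close>.\<close>

lemma growth_vertex_eq_frame_op:
  assumes ij: "1 \<le> i" "i < j" "j \<le> N"
  shows "(1 / Delta2 g N i j) *\<^sub>R upsilon2 g N i j
    = frame_op ((1 / grid_norm (g i \<times> g j)) *\<^sub>R (g i \<times> g j))"
proof -
  let ?h = "g i \<times> g j"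
  have hij: "?h \<bullet> g i = 0" "?h \<bullet> g j = 0" by (simp_all add: dot_cross_self)
  have inv: "1 / delta3 g i j k = \<bar>?h \<bullet> g k\<bar> / norm ?h" for k
    by (simp add: delta3_def hvec_def)
  have eps: "eps3 g i j k / delta3 g i j k = (?h \<bullet> g k) / norm ?h" for k
  proof -
    have "eps3 g i j k * \<bar>?h \<bullet> g k\<bar> = ?h \<bullet> g k"
      by (simp add: eps3_def Ddet_def det_vector3_eq_triple_product)
    thus ?thesis using inv[of k] by (simp add: divide_inverse mult.assoc)
  qed
  have drop_ij: "(\<Sum>k\<in>I - {i, j}. f k) = (\<Sum>k\<in>I. f k)"
    if "f i = 0" "f j = 0" for f :: "nat \<Rightarrow> 'b::comm_monoid_add"
  proof -
    have "(\<Sum>k\<in>I. f k) = (\<Sum>k\<in>I - {i, j}. f k) + (\<Sum>k\<in>{i, j}. f k)"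
      by (rule sum.subset_diff) (use ij in auto)
    thus ?thesis using that ij by simp
  qed
  have Delta: "Delta2 g N i j = grid_norm ?h / norm ?h"
    using drop_ij[of "\<lambda>k. \<bar>?h \<bullet> g k\<bar> / norm ?h"] hij
    by (simp add: Delta2_def inv grid_norm_def sum_divide_distrib)
  have upsilon: "upsilon2 g N i j = (1 / norm ?h) *\<^sub>R frame_op ?h"
    using drop_ij[of "\<lambda>k. ((?h \<bullet> g k) / norm ?h) *\<^sub>R g k"] hij
    by (simp add: upsilon2_def eps frame_op_def scaleR_sum_right)
  show ?thesis
  proof (cases "?h = 0")
    case True
    thus ?thesis by (simp add: Delta upsilon linear_0[OF linear_frame_op])
  next
    case False
    hence "(1 / (grid_norm ?h / norm ?h)) * (1 / norm ?h) = 1 / grid_norm ?h"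
      by (cases "grid_norm ?h = 0") (simp_all add: field_simps)
    thus ?thesis by (simp add: Delta upsilon frame_op_scaleR)
  qed
qed

lemma growth_vertices_eq_frame_op_image: "growth_vertices g N = frame_op ` ball_vertices"
proof (rule set_eqI, rule iffI)
  fix x assume "x \<in> growth_vertices g N"
  then obtain s i j where x: "x = s *\<^sub>R ((1 / Delta2 g N i j) *\<^sub>R upsilon2 g N i j)"
    and sij: "s \<in> {1, -1}" "1 \<le> i" "i < j" "j \<le> N"
    unfolding growth_vertices_def by blast
  hence "x = frame_op (s *\<^sub>R ((1 / grid_norm (g i \<times> g j)) *\<^sub>R (g i \<times> g j)))"
    by (simp add: growth_vertex_eq_frame_op frame_op_scaleR)
  moreover have "s *\<^sub>R ((1 / grid_norm (g i \<times> g j)) *\<^sub>R (g i \<times> g j)) \<in> ball_vertices"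
    unfolding ball_vertices_def using sij by blast
  ultimately show "x \<in> frame_op ` ball_vertices" by blast
next
  fix x assume "x \<in> frame_op ` ball_vertices"
  then obtain s i j where x: "x = frame_op (s *\<^sub>R ((1 / grid_norm (g i \<times> g j)) *\<^sub>R (g i \<times> g j)))"
    and sij: "s \<in> {1, -1}" "1 \<le> i" "i < j" "j \<le> N"
    unfolding ball_vertices_def by blast
  hence "x = s *\<^sub>R ((1 / Delta2 g N i j) *\<^sub>R upsilon2 g N i j)"
    by (simp add: growth_vertex_eq_frame_op frame_op_scaleR)
  thus "x \<in> growth_vertices g N" unfolding growth_vertices_def using sij by blast
qed

lemma sum_coord_eq_frame_op: "(\<Sum>k\<in>I. coord p k *\<^sub>R g k) = frame_op p - (\<Sum>k\<in>I. \<gamma> k *\<^sub>R g k)"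
  by (simp add: coord_def frame_op_def scaleR_diff_left sum_subtractf)

lemma compact_growth_form: "compact (frontier (convex hull (growth_vertices g N)))"
  using finite_ball_vertices
  by (intro compact_frontier compact_convex_hull finite_imp_compact) (simp add: growth_vertices_eq_frame_op_image)

end

locale spanning_grid3 = grid3 +
  assumes three_directions: "\<exists>a\<in>{1..N}. \<exists>b\<in>{1..N}. \<exists>c\<in>{1..N}. g a \<noteq> g b \<and> g a \<noteq> g c \<and> g b \<noteq> g c"
begin

lemma obtain_two_other_directions:
  obtains c d where "c \<in> I" "d \<in> I" "g c \<noteq> g i" "g d \<noteq> g i" "g c \<noteq> g d"
proof -
  obtain a b c where abc: "a \<in> I" "b \<in> I" "c \<in> I" "g a \<noteq> g b" "g a \<noteq> g c" "g b \<noteq> g c"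
    using three_directions by blast
  consider "g i = g a" | "g i = g b" | "g i \<noteq> g a" "g i \<noteq> g b" by blast
  thus ?thesis using that abc by cases metis+
qed

lemma obtain_third_direction:
  assumes "g i \<noteq> g j"
  obtains c where "c \<in> I" "g c \<noteq> g i" "g c \<noteq> g j"
proof -
  obtain c d where cd: "c \<in> I" "d \<in> I" "g c \<noteq> g i" "g d \<noteq> g i" "g c \<noteq> g d"
    using obtain_two_other_directions .
  show ?thesis using that[of c] that[of d] cd by (cases "g c = g j") auto
qed

text \<open>Regularity rules out two coinciding plane families: through a plane of both families
  and two transversal planes there would be a point on four grid planes.\<close>

lemma shift_diff_not_Int_if_parallel:
  assumes ij: "i \<in> I" "j \<in> I" "i \<noteq> j" "g i = g j"
  shows "\<gamma> i - \<gamma> j \<notin> \<int>"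
proof
  assume int: "\<gamma> i - \<gamma> j \<in> \<int>"
  obtain c d where cd: "c \<in> I" "d \<in> I" "g c \<noteq> g i" "g d \<noteq> g i" "g c \<noteq> g d"
    using obtain_two_other_directions .
  have ne: "i \<noteq> c" "i \<noteq> d" "c \<noteq> d" "j \<noteq> c" "j \<noteq> d" using cd ij by auto
  have D: "(g i \<times> g c) \<bullet> g d \<noteq> 0" using triple_product_g_nonzero ij cd ne by metis
  define x where "x = (1 / ((g i \<times> g c) \<bullet> g d)) *\<^sub>R (\<gamma> i *\<^sub>R (g c \<times> g d) + \<gamma> c *\<^sub>R (g d \<times> g i) + \<gamma> d *\<^sub>R (g i \<times> g c))"
  have "x \<bullet> g i = \<gamma> i" "x \<bullet> g c = \<gamma> c" "x \<bullet> g d = \<gamma> d"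
    using cramer3[OF D] by (simp_all add: x_def)
  hence "{i, j, c, d} \<subseteq> S x" using int ij cd by (auto simp: S_eq coord_def)
  hence "card {i, j, c, d} \<le> card (S x)" by (intro card_mono) auto
  thus False using card_S_le_3[of x] ne ij by simp
qed

lemma g_distinct_on_S:
  assumes "i \<in> S p" "j \<in> S p" "i \<noteq> j"
  shows "g i \<noteq> g j"
proof
  assume e: "g i = g j"
  have "coord p j - coord p i \<in> \<int>" using assms by (auto simp: S_eq)
  moreover have "coord p j - coord p i = \<gamma> i - \<gamma> j" using e by (simp add: coord_def)
  moreover have "i \<in> I" "j \<in> I" using assms S_subset[of p] by blast+
  ultimately show False using shift_diff_not_Int_if_parallel[OF _ _ assms(3) e] by simp
qed

lemma triple_product_S_nonzero:
  assumes "S p = {a, b, c}" "a \<noteq> b" "a \<noteq> c" "b \<noteq> c"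
  shows "(g a \<times> g b) \<bullet> g c \<noteq> 0"
  using assms triple_product_g_nonzero g_distinct_on_S S_subset[of p] by (metis insert_subset insertI1 insertCI)

lemma obtain_vertex_planes:
  assumes "grid_vertex p"
  obtains a b c where "S p = {a, b, c}" "a \<noteq> b" "a \<noteq> c" "b \<noteq> c"
proof -
  obtain a b c where "S p = {a, b, c}" "a \<noteq> b" "b \<noteq> c" "a \<noteq> c"
    using grid_vertex_card[OF assms] by (auto simp: card_3_iff)
  thus ?thesis using that by blast
qed

lemma grid_norm_lower_bound:
  obtains c where "0 < c" "\<And>v. c * norm v \<le> grid_norm v"
proof -
  obtain a b c where abc: "a \<in> I" "b \<in> I" "c \<in> I" "g a \<noteq> g b" "g a \<noteq> g c" "g b \<noteq> g c"
    using three_directions by blast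
  have ne: "a \<noteq> b" "a \<noteq> c" "b \<noteq> c" using abc by auto
  have D: "(g a \<times> g b) \<bullet> g c \<noteq> 0" using triple_product_g_nonzero abc ne by metis
  show ?thesis
  proof (rule that[of "\<bar>(g a \<times> g b) \<bullet> g c\<bar>"])
    show "0 < \<bar>(g a \<times> g b) \<bullet> g c\<bar>" using D by simp
  next
    fix v
    have "norm v \<le> (\<bar>v \<bullet> g a\<bar> + \<bar>v \<bullet> g b\<bar> + \<bar>v \<bullet> g c\<bar>) / \<bar>(g a \<times> g b) \<bullet> g c\<bar>"
      using norm_le_triple_product[OF D] abc norm_g by simp
    also have "\<bar>v \<bullet> g a\<bar> + \<bar>v \<bullet> g b\<bar> + \<bar>v \<bullet> g c\<bar> = (\<Sum>k\<in>{a, b, c}. \<bar>v \<bullet> g k\<bar>)"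
      using ne by simp
    also have "\<dots> \<le> grid_norm v" unfolding grid_norm_def using abc by (intro sum_mono2) auto
    finally show "\<bar>(g a \<times> g b) \<bullet> g c\<bar> * norm v \<le> grid_norm v"
      using D by (simp add: field_simps divide_right_mono)
  qed
qed

lemma grid_norm_pos: "v \<noteq> 0 \<Longrightarrow> 0 < grid_norm v"
  by (metis grid_norm_lower_bound mult_pos_pos zero_less_norm_iff order_less_le_trans)

lemma grid_norm_eq_0_iff [simp]: "grid_norm v = 0 \<longleftrightarrow> v = 0"
  using grid_norm_pos by fastforce

definition grid_norm_face :: "(nat \<Rightarrow> real) \<Rightarrow> (real^3) set" where
  "grid_norm_face s = {x. (\<forall>k\<in>I. 0 \<le> s k * (x \<bullet> g k)) \<and> (\<Sum>k\<in>I. s k * (x \<bullet> g k)) = 1}"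

lemma grid_norm_eq_1_on_face:
  assumes s: "\<forall>k\<in>I. s k = 1 \<or> s k = -1" and x: "x \<in> grid_norm_face s"
  shows "grid_norm x = 1"
proof -
  have "\<bar>x \<bullet> g k\<bar> = s k * (x \<bullet> g k)" if k: "k \<in> I" for k
  proof -
    have "0 \<le> s k * (x \<bullet> g k)" using x k by (simp add: grid_norm_face_def)
    thus ?thesis using s[rule_format, OF k] by auto
  qed
  hence "grid_norm x = (\<Sum>k\<in>I. s k * (x \<bullet> g k))" unfolding grid_norm_def by simp
  thus ?thesis using x by (simp add: grid_norm_face_def)
qed

lemma convex_grid_norm_face: "convex (grid_norm_face s)"
proof (rule convexI)
  fix x y and a b :: real
  assume xy: "x \<in> grid_norm_face s" "y \<in> grid_norm_face s" and ab: "0 \<le> a" "0 \<le> b" "a + b = 1"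
  have lin: "s k * ((a *\<^sub>R x + b *\<^sub>R y) \<bullet> g k) = a * (s k * (x \<bullet> g k)) + b * (s k * (y \<bullet> g k))" for k
    by (simp add: inner_add_left algebra_simps)
  show "a *\<^sub>R x + b *\<^sub>R y \<in> grid_norm_face s"
    using xy ab by (simp add: grid_norm_face_def lin sum.distrib sum_distrib_left[symmetric])
qed

lemma compact_grid_norm_face:
  assumes s: "\<forall>k\<in>I. s k = 1 \<or> s k = -1"
  shows "compact (grid_norm_face s)"
proof -
  have "grid_norm_face s = (\<Inter>k\<in>I. {x. 0 \<le> s k * (x \<bullet> g k)}) \<inter> {x. (\<Sum>k\<in>I. s k * (x \<bullet> g k)) = 1}"
    by (auto simp: grid_norm_face_def)
  moreover have "closed ((\<Inter>k\<in>I. {x. 0 \<le> s k * (x \<bullet> g k)}) \<inter> {x. (\<Sum>k\<in>I. s k * (x \<bullet> g k)) = 1})"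
    by (intro closed_Int closed_INT ballI closed_Collect_le closed_Collect_eq continuous_intros)
  ultimately have closed: "closed (grid_norm_face s)" by simp
  obtain c where c: "0 < c" "\<And>v. c * norm v \<le> grid_norm v" using grid_norm_lower_bound by blast
  have "norm x \<le> 1 / c" if "x \<in> grid_norm_face s" for x
    using c(2)[of x] grid_norm_eq_1_on_face[OF s that] c(1) by (simp add: field_simps)
  hence "bounded (grid_norm_face s)" unfolding bounded_iff by blast
  thus ?thesis using closed by (simp add: compact_eq_bounded_closed)
qed

lemma ball_vertex_if_two_zero_coords:
  assumes e: "grid_norm e = 1" and ij: "i \<in> I" "j \<in> I" "g i \<noteq> g j" and "e \<bullet> g i = 0" "e \<bullet> g j = 0"
  shows "e \<in> ball_vertices"
proof -
  let ?h = "g i \<times> g j"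
  have h: "?h \<noteq> 0" using cross_g_nonzero ij by blast
  define l where "l = (e \<bullet> ?h) / (?h \<bullet> ?h)"
  have el: "e = l *\<^sub>R ?h" using orthogonal_both_imp_multiple_cross[OF h] assms by (simp add: l_def)
  hence "\<bar>l\<bar> * grid_norm ?h = 1" using e by (simp add: grid_norm_scaleR)
  hence "\<bar>l\<bar> = 1 / grid_norm ?h" by (auto simp: eq_divide_eq)
  hence "l = 1 / grid_norm ?h \<or> l = - (1 / grid_norm ?h)" by (metis abs_if minus_minus)
  hence "e = 1 *\<^sub>R ((1 / grid_norm ?h) *\<^sub>R ?h) \<or> e = (-1) *\<^sub>R ((1 / grid_norm ?h) *\<^sub>R ?h)"
    using el by auto
  moreover have "i \<noteq> j" using ij by auto
  ultimately show ?thesis using ball_verticesI[OF ij(1,2), of 1] ball_verticesI[OF ij(1,2), of "-1"] by blast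
qed

text \<open>If the vanishing coordinates of \<open>e\<close> all belong to one direction, a direction \<open>d\<close> orthogonal
  to it and to \<open>\<Sum>\<^sub>k s\<^sub>k g\<^sub>k\<close> keeps \<open>e \<plusminus> \<epsilon> d\<close> on the face for small \<open>\<epsilon>\<close>.\<close>

lemma not_extreme_point_if_zero_coords_parallel:
  assumes s: "\<forall>k\<in>I. s k = 1 \<or> s k = -1" and eQ: "e \<in> grid_norm_face s"
    and parallel: "\<forall>i\<in>{k\<in>I. e \<bullet> g k = 0}. \<forall>j\<in>{k\<in>I. e \<bullet> g k = 0}. g i = g j"
  shows "\<not> e extreme_point_of grid_norm_face s"
proof -
  let ?Z = "{k\<in>I. e \<bullet> g k = 0}"
  let ?\<sigma> = "\<Sum>k\<in>I. s k *\<^sub>R g k"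
  have "dim (insert ?\<sigma> (g ` ?Z)) \<le> card (insert ?\<sigma> (g ` ?Z))" by (rule dim_le_card) (auto intro: span_base)
  also have "\<dots> \<le> Suc (card (g ` ?Z))" by (simp add: card_insert_le_m1 card_insert_if)
  also have "card (g ` ?Z) \<le> 1" using parallel by (auto simp: card_le_Suc0_iff_eq)
  finally obtain d where d: "d \<noteq> 0" "\<And>y. y \<in> span (insert ?\<sigma> (g ` ?Z)) \<Longrightarrow> orthogonal d y"
    using orthogonal_to_subspace_exists[of "insert ?\<sigma> (g ` ?Z)"] by auto
  have dZ: "d \<bullet> g k = 0" if "k \<in> ?Z" for k
    using d(2)[of "g k"] that by (auto simp: orthogonal_def intro: span_base)
  have d\<sigma>: "(\<Sum>k\<in>I. s k * (d \<bullet> g k)) = 0"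
    using d(2)[of ?\<sigma>] by (auto simp: orthogonal_def inner_sum_right intro: span_base)
  have pos: "0 < s k * (e \<bullet> g k)" if "k \<in> I - ?Z" for k
  proof -
    have "0 \<le> s k * (e \<bullet> g k)" using eQ that by (simp add: grid_norm_face_def)
    moreover have "s k \<noteq> 0" "e \<bullet> g k \<noteq> 0" using s that by force+
    ultimately show ?thesis by (simp add: order_le_less)
  qed
  obtain \<epsilon> where \<epsilon>: "0 < \<epsilon>" "\<forall>k\<in>I - ?Z. \<epsilon> \<le> s k * (e \<bullet> g k) / (\<bar>d \<bullet> g k\<bar> + 1)"
    using finite_pos_lower_bound[of "I - ?Z" "\<lambda>k. s k * (e \<bullet> g k) / (\<bar>d \<bullet> g k\<bar> + 1)"] pos
    by (auto intro: divide_pos_pos)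
  have on_face: "e + c *\<^sub>R d \<in> grid_norm_face s" if c: "\<bar>c\<bar> \<le> \<epsilon>" for c
  proof -
    have "0 \<le> s k * ((e + c *\<^sub>R d) \<bullet> g k)" if k: "k \<in> I" for k
    proof (cases "k \<in> ?Z")
      case True
      thus ?thesis using dZ by (simp add: inner_add_left)
    next
      case False
      have "\<bar>s k\<bar> = 1" using s[rule_format, OF k] by auto
      hence "\<bar>c * (s k * (d \<bullet> g k))\<bar> \<le> \<epsilon> * \<bar>d \<bullet> g k\<bar>"
        using c by (simp add: abs_mult mult_right_mono)
      also have "\<dots> \<le> s k * (e \<bullet> g k) / (\<bar>d \<bullet> g k\<bar> + 1) * \<bar>d \<bullet> g k\<bar>"
        using \<epsilon>(2) k False by (intro mult_right_mono) auto
      also have "\<dots> \<le> s k * (e \<bullet> g k)"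
        using pos[of k] k False by (simp add: field_simps)
      finally show ?thesis by (simp add: inner_add_left algebra_simps)
    qed
    moreover have "(\<Sum>k\<in>I. s k * ((e + c *\<^sub>R d) \<bullet> g k)) = 1"
      using eQ d\<sigma> by (simp add: grid_norm_face_def inner_add_left algebra_simps sum.distrib sum_distrib_left[symmetric])
    ultimately show ?thesis by (simp add: grid_norm_face_def)
  qed
  have "(- \<epsilon>) *\<^sub>R d \<noteq> \<epsilon> *\<^sub>R d" using \<epsilon>(1) d(1) by (simp only: scaleR_cancel_right) simp
  hence "e + (- \<epsilon>) *\<^sub>R d \<noteq> e + \<epsilon> *\<^sub>R d" by (metis add_left_cancel)
  moreover have "e = midpoint (e + (- \<epsilon>) *\<^sub>R d) (e + \<epsilon> *\<^sub>R d)"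
    by (simp add: midpoint_def algebra_simps scaleR_2[symmetric])
  ultimately have "e \<in> open_segment (e + (- \<epsilon>) *\<^sub>R d) (e + \<epsilon> *\<^sub>R d)" by (metis midpoint_in_open_segment)
  thus ?thesis using on_face[of \<epsilon>] on_face[of "- \<epsilon>"] \<epsilon>(1) by (auto simp: extreme_point_of_def)
qed

lemma extreme_point_of_grid_norm_face:
  assumes s: "\<forall>k\<in>I. s k = 1 \<or> s k = -1" and e: "e extreme_point_of grid_norm_face s"
  shows "e \<in> ball_vertices"
proof -
  have eQ: "e \<in> grid_norm_face s" using e by (simp add: extreme_point_of_def)
  obtain i j where "i \<in> I" "j \<in> I" "g i \<noteq> g j" "e \<bullet> g i = 0" "e \<bullet> g j = 0"
    using not_extreme_point_if_zero_coords_parallel[OF s eQ] e by blast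
  thus ?thesis using ball_vertex_if_two_zero_coords grid_norm_eq_1_on_face[OF s eQ] by blast
qed

lemma in_convex_hull_ball_vertices_if_grid_norm_1:
  assumes v: "grid_norm v = 1"
  shows "v \<in> convex hull ball_vertices"
proof -
  define s where "s k = (if 0 \<le> v \<bullet> g k then 1 else (-1::real))" for k
  have s: "\<forall>k\<in>I. s k = 1 \<or> s k = -1" by (simp add: s_def)
  have "s k * (v \<bullet> g k) = \<bar>v \<bullet> g k\<bar>" for k by (simp add: s_def)
  hence "v \<in> grid_norm_face s" using v by (simp add: grid_norm_face_def grid_norm_def)
  hence "v \<in> convex hull {x. x extreme_point_of grid_norm_face s}"
    using Krein_Milman_Minkowski[OF compact_grid_norm_face[OF s] convex_grid_norm_face] by blast
  also have "\<dots> \<subseteq> convex hull ball_vertices"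
    by (rule hull_mono) (auto intro: extreme_point_of_grid_norm_face[OF s])
  finally show ?thesis .
qed

lemma zero_in_convex_hull_ball_vertices: "0 \<in> convex hull ball_vertices"
proof -
  have "(1::nat) \<in> I" "(2::nat) \<in> I" using N_ge_3 by auto
  then obtain w where w: "w \<in> ball_vertices" using ball_verticesI[of 1 2 1] by auto
  hence "(1/2) *\<^sub>R w + (1/2) *\<^sub>R (- w) \<in> convex hull ball_vertices"
    using uminus_ball_vertex[OF w] by (intro convexD[OF convex_convex_hull]) (auto intro: hull_inc)
  thus ?thesis by simp
qed

lemma grid_norm_ball_eq_convex_hull: "{v. grid_norm v \<le> 1} = convex hull ball_vertices"
proof
  show "{v. grid_norm v \<le> 1} \<subseteq> convex hull ball_vertices"
  proof
    fix v assume v: "v \<in> {v. grid_norm v \<le> 1}"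
    show "v \<in> convex hull ball_vertices"
    proof (cases "v = 0")
      case True
      thus ?thesis using zero_in_convex_hull_ball_vertices by simp
    next
      case False
      have p: "0 < grid_norm v" using False grid_norm_pos by blast
      hence "grid_norm ((1 / grid_norm v) *\<^sub>R v) = 1" using False by (simp add: grid_norm_scaleR)
      hence "(1 / grid_norm v) *\<^sub>R v \<in> convex hull ball_vertices"
        by (rule in_convex_hull_ball_vertices_if_grid_norm_1)
      hence "grid_norm v *\<^sub>R ((1 / grid_norm v) *\<^sub>R v) + (1 - grid_norm v) *\<^sub>R 0 \<in> convex hull ball_vertices"
        using zero_in_convex_hull_ball_vertices p v by (intro convexD[OF convex_convex_hull]) auto
      thus ?thesis using p False by simp
    qed
  qed
qed (rule convex_hull_ball_vertices_subset)

lemma small_step_within_cell_coords: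
  obtains e0 where "0 < e0" "\<And>\<epsilon> k. 0 < \<epsilon> \<Longrightarrow> \<epsilon> \<le> e0 \<Longrightarrow> k \<in> I - S p \<Longrightarrow>
    ceil_coord p k - 1 < coord (p + \<epsilon> *\<^sub>R d) k \<and> coord (p + \<epsilon> *\<^sub>R d) k < ceil_coord p k"
proof -
  define \<delta> where "\<delta> k = min (coord p k - (ceil_coord p k - 1)) (ceil_coord p k - coord p k)" for k
  have \<delta>_pos: "0 < \<delta> k" if k: "k \<in> I - S p" for k
    using coord_less_ceil_coord_if_not_S[of k p] ceil_coord_bounds(2)[of p k] k by (auto simp: \<delta>_def)
  obtain e0 where e0: "0 < e0" "\<forall>k\<in>I - S p. e0 \<le> \<delta> k / (\<bar>d \<bullet> g k\<bar> + 1)"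
    using finite_pos_lower_bound[of "I - S p" "\<lambda>k. \<delta> k / (\<bar>d \<bullet> g k\<bar> + 1)"] \<delta>_pos by auto
  have "ceil_coord p k - 1 < coord (p + \<epsilon> *\<^sub>R d) k \<and> coord (p + \<epsilon> *\<^sub>R d) k < ceil_coord p k"
    if \<epsilon>: "0 < \<epsilon>" "\<epsilon> \<le> e0" and k: "k \<in> I - S p" for \<epsilon> k
  proof -
    have "\<bar>\<epsilon> * (d \<bullet> g k)\<bar> \<le> e0 * \<bar>d \<bullet> g k\<bar>" using \<epsilon> by (auto simp: abs_mult intro: mult_right_mono)
    also have "\<dots> \<le> \<delta> k / (\<bar>d \<bullet> g k\<bar> + 1) * \<bar>d \<bullet> g k\<bar>" using e0(2) k by (intro mult_right_mono) auto
    also have "\<dots> < \<delta> k" using \<delta>_pos[OF k] by (simp add: field_simps)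
    finally have "\<bar>\<epsilon> * (d \<bullet> g k)\<bar> < \<delta> k" .
    moreover have "\<delta> k \<le> coord p k - (ceil_coord p k - 1)" "\<delta> k \<le> ceil_coord p k - coord p k"
      by (simp_all add: \<delta>_def)
    ultimately show ?thesis by (simp add: coord_add abs_less_iff)
  qed
  thus ?thesis using that e0(1) by blast
qed

lemma exists_cell_at_vertex:
  assumes abc: "S p = {a, b, c}" "a \<noteq> b" "a \<noteq> c" "b \<noteq> c"
    and e: "ea \<in> {0, 1}" "eb \<in> {0, 1}" "ec \<in> {0, 1}"
  shows "\<exists>x. x \<notin> grid \<and> p \<in> closure (connected_component_set (- grid) x) \<and>
             Kgrid x = Kgrid p + ea *\<^sub>R g a + eb *\<^sub>R g b + ec *\<^sub>R g c"
proof -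
  have D: "(g a \<times> g b) \<bullet> g c \<noteq> 0" using triple_product_S_nonzero[OF abc] .
  have abcI: "a \<in> I" "b \<in> I" "c \<in> I" using abc S_subset[of p] by auto
  define ee where "ee k = (if k = a then ea else if k = b then eb else if k = c then ec else 0)" for k
  \<comment> \<open>Move off p in a direction that increases exactly the coordinates with \<open>ee k = 1\<close>.\<close>
  define d where "d = (1 / ((g a \<times> g b) \<bullet> g c)) *\<^sub>R ((2 * ea - 1) *\<^sub>R (g b \<times> g c)
      + (2 * eb - 1) *\<^sub>R (g c \<times> g a) + (2 * ec - 1) *\<^sub>R (g a \<times> g b))"
  have "d \<bullet> g a = 2 * ea - 1" "d \<bullet> g b = 2 * eb - 1" "d \<bullet> g c = 2 * ec - 1"
    using cramer3[OF D, of "2 * ea - 1" "2 * eb - 1" "2 * ec - 1"] by (simp_all add: d_def)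
  hence d_S: "d \<bullet> g k = 2 * ee k - 1" if "k \<in> S p" for k
    using that abc by (auto simp: ee_def)
  obtain e0 where e0: "0 < e0" "\<And>\<epsilon> k. 0 < \<epsilon> \<Longrightarrow> \<epsilon> \<le> e0 \<Longrightarrow> k \<in> I - S p \<Longrightarrow>
      ceil_coord p k - 1 < coord (p + \<epsilon> *\<^sub>R d) k \<and> coord (p + \<epsilon> *\<^sub>R d) k < ceil_coord p k"
    using small_step_within_cell_coords by blast
  define \<epsilon>0 where "\<epsilon>0 = min e0 (1/2)"
  have \<epsilon>0: "0 < \<epsilon>0" "\<epsilon>0 \<le> 1/2" "\<epsilon>0 \<le> e0" using e0 by (auto simp: \<epsilon>0_def)
  have perturbed: "coord (p + \<epsilon> *\<^sub>R d) k \<notin> \<int>" "ceil_coord (p + \<epsilon> *\<^sub>R d) k = ceil_coord p k + ee k"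
    if \<epsilon>: "0 < \<epsilon>" "\<epsilon> \<le> \<epsilon>0" and k: "k \<in> I" for \<epsilon> k
  proof -
    have ee: "ee k \<in> {0, 1}" using e by (simp add: ee_def)
    have "ceil_coord p k + ee k - 1 < coord (p + \<epsilon> *\<^sub>R d) k \<and> coord (p + \<epsilon> *\<^sub>R d) k < ceil_coord p k + ee k"
    proof (cases "k \<in> S p")
      case True
      thus ?thesis using d_S[OF True] ee \<epsilon> \<epsilon>0 by (auto simp: coord_add ceil_coord_eq_if_S)
    next
      case False
      moreover have "ee k = 0" using False abc by (auto simp: ee_def)
      ultimately show ?thesis using e0(2)[of \<epsilon> k] \<epsilon> \<epsilon>0(3) k by simp
    qed
    moreover have "ceil_coord p k + ee k \<in> \<int>" using ee ceil_coord_Int[of p k] by auto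
    ultimately have "of_int \<lceil>coord (p + \<epsilon> *\<^sub>R d) k\<rceil> = ceil_coord p k + ee k"
      "coord (p + \<epsilon> *\<^sub>R d) k \<notin> \<int>"
      using ceiling_eq_if_between[of "ceil_coord p k + ee k" "coord (p + \<epsilon> *\<^sub>R d) k"] by simp_all
    thus "coord (p + \<epsilon> *\<^sub>R d) k \<notin> \<int>" "ceil_coord (p + \<epsilon> *\<^sub>R d) k = ceil_coord p k + ee k"
      by (simp_all add: ceil_coord_def)
  qed
  have off_grid: "p + \<epsilon> *\<^sub>R d \<notin> grid" if "0 < \<epsilon>" "\<epsilon> \<le> \<epsilon>0" for \<epsilon>
    using perturbed(1)[OF that] by (auto simp: grid_iff)
  have "Kgrid (p + \<epsilon>0 *\<^sub>R d) = (\<Sum>k\<in>I. (ceil_coord p k + ee k) *\<^sub>R g k)"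
    unfolding Kmap_eq_sum using perturbed(2)[OF \<epsilon>0(1) order_refl] by (intro sum.cong) auto
  also have "\<dots> = Kgrid p + (\<Sum>k\<in>I. ee k *\<^sub>R g k)"
    by (simp add: Kmap_eq_sum scaleR_add_left sum.distrib)
  also have "(\<Sum>k\<in>I. ee k *\<^sub>R g k) = (\<Sum>k\<in>I. (if k = a then ea *\<^sub>R g a else 0)
      + (if k = b then eb *\<^sub>R g b else 0) + (if k = c then ec *\<^sub>R g c else 0))"
    using abc by (intro sum.cong) (auto simp: ee_def)
  also have "\<dots> = ea *\<^sub>R g a + eb *\<^sub>R g b + ec *\<^sub>R g c"
    using abcI by (simp add: sum.distrib)
  finally have "Kgrid (p + \<epsilon>0 *\<^sub>R d) = Kgrid p + ea *\<^sub>R g a + eb *\<^sub>R g b + ec *\<^sub>R g c"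
    by (simp add: add.assoc)
  moreover have "p \<in> closure (connected_component_set (- grid) (p + \<epsilon>0 *\<^sub>R d))"
    by (rule in_closure_component_if_segment_avoids[OF \<epsilon>0(1)]) (use off_grid in blast)
  ultimately show ?thesis using off_grid[OF \<epsilon>0(1) order_refl] by blast
qed

lemma vertex_parallelepiped_subset_tile:
  assumes abc: "S p = {a, b, c}" "a \<noteq> b" "a \<noteq> c" "b \<noteq> c"
    and s: "0 \<le> sa" "sa \<le> 1" "0 \<le> sb" "sb \<le> 1" "0 \<le> sc" "sc \<le> 1"
  shows "Kgrid p + sa *\<^sub>R g a + sb *\<^sub>R g b + sc *\<^sub>R g c \<in> tile p"
proof -
  have cv: "convex (tile p)" unfolding grid_tile_at_def by (rule convex_convex_hull)
  have corner: "Kgrid p + ea *\<^sub>R g a + eb *\<^sub>R g b + ec *\<^sub>R g c \<in> tile p"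
    if e: "ea \<in> {0, 1}" "eb \<in> {0, 1}" "ec \<in> {0, 1}" for ea eb ec
  proof -
    obtain x where x: "x \<notin> grid" "p \<in> closure (connected_component_set (- grid) x)"
      "Kgrid x = Kgrid p + ea *\<^sub>R g a + eb *\<^sub>R g b + ec *\<^sub>R g c"
      using exists_cell_at_vertex[OF abc e] by blast
    hence "Kgrid x \<in> tile p" unfolding grid_tile_at_def by (intro hull_inc) blast
    thus ?thesis using x(3) by simp
  qed
  have edge: "Kgrid p + sa *\<^sub>R g a + eb *\<^sub>R g b + ec *\<^sub>R g c \<in> tile p"
    if e: "eb \<in> {0, 1}" "ec \<in> {0, 1}" for eb ec
  proof -
    have "(Kgrid p + 0 *\<^sub>R g a + eb *\<^sub>R g b + ec *\<^sub>R g c) + sa *\<^sub>R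
        ((Kgrid p + 1 *\<^sub>R g a + eb *\<^sub>R g b + ec *\<^sub>R g c) - (Kgrid p + 0 *\<^sub>R g a + eb *\<^sub>R g b + ec *\<^sub>R g c))
        \<in> tile p"
      using e s by (intro convex_segment_point[OF cv] corner) auto
    thus ?thesis by (simp add: algebra_simps)
  qed
  have face: "Kgrid p + sa *\<^sub>R g a + sb *\<^sub>R g b + ec *\<^sub>R g c \<in> tile p" if e: "ec \<in> {0, 1}" for ec
  proof -
    have "(Kgrid p + sa *\<^sub>R g a + 0 *\<^sub>R g b + ec *\<^sub>R g c) + sb *\<^sub>R
        ((Kgrid p + sa *\<^sub>R g a + 1 *\<^sub>R g b + ec *\<^sub>R g c) - (Kgrid p + sa *\<^sub>R g a + 0 *\<^sub>R g b + ec *\<^sub>R g c))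
        \<in> tile p"
      using e s by (intro convex_segment_point[OF cv] edge) auto
    thus ?thesis by (simp add: algebra_simps)
  qed
  have "(Kgrid p + sa *\<^sub>R g a + sb *\<^sub>R g b + 0 *\<^sub>R g c) + sc *\<^sub>R
      ((Kgrid p + sa *\<^sub>R g a + sb *\<^sub>R g b + 1 *\<^sub>R g c) - (Kgrid p + sa *\<^sub>R g a + sb *\<^sub>R g b + 0 *\<^sub>R g c))
      \<in> tile p"
    using s by (intro convex_segment_point[OF cv] face) auto
  thus ?thesis by (simp add: algebra_simps)
qed

lemma face_point_in_tile:
  assumes ij: "i \<noteq> j" and Su: "S u = {i, j, c}" "c \<noteq> i" "c \<noteq> j"
    and \<phi>: "\<forall>k\<in>I - {i, j, c}. \<phi> k = ceil_coord u k" "\<phi> c - ceil_coord u c \<in> {0, 1}"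
    and s: "0 \<le> si" "si \<le> 1" "0 \<le> sj" "sj \<le> 1"
  shows "(\<Sum>k\<in>I - {i, j}. \<phi> k *\<^sub>R g k) + (coord u i + si) *\<^sub>R g i + (coord u j + sj) *\<^sub>R g j \<in> tile u"
proof -
  have I3: "i \<in> I" "j \<in> I" "c \<in> I" using Su S_subset[of u] by auto
  define sc where "sc = \<phi> c - ceil_coord u c"
  have "0 \<le> sc" "sc \<le> 1" using \<phi>(2) by (auto simp: sc_def)
  hence "Kgrid u + si *\<^sub>R g i + sj *\<^sub>R g j + sc *\<^sub>R g c \<in> tile u"
    using s by (intro vertex_parallelepiped_subset_tile[OF Su(1) ij Su(2,3)[symmetric]])
  moreover have "(\<Sum>k\<in>I - {i, j}. \<phi> k *\<^sub>R g k)
      = (\<Sum>k\<in>I - {i, j}. ceil_coord u k *\<^sub>R g k + (if k = c then sc *\<^sub>R g c else 0))"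
    using \<phi>(1) by (intro sum.cong) (auto simp: sc_def scaleR_diff_left)
  moreover have "(\<Sum>k\<in>I - {i, j}. ceil_coord u k *\<^sub>R g k + (if k = c then sc *\<^sub>R g c else 0))
      = (\<Sum>k\<in>I - {i, j}. ceil_coord u k *\<^sub>R g k) + sc *\<^sub>R g c"
    using I3 Su by (simp add: sum.distrib)
  moreover have "Kgrid u = (\<Sum>k\<in>I - {i, j}. ceil_coord u k *\<^sub>R g k) + coord u i *\<^sub>R g i + coord u j *\<^sub>R g j"
  proof -
    have "Kgrid u = (\<Sum>k\<in>I - {i, j}. ceil_coord u k *\<^sub>R g k) + (\<Sum>k\<in>{i, j}. ceil_coord u k *\<^sub>R g k)"
      unfolding Kmap_eq_sum by (rule sum.subset_diff) (use I3 in auto)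
    thus ?thesis using ij Su by (simp add: ceil_coord_eq_if_S add.assoc)
  qed
  ultimately show ?thesis by (simp add: algebra_simps)
qed

text \<open>If the segment from \<open>u\<close> to \<open>z\<close> runs inside the grid line \<open>{i, j}\<close> without crossing another
  plane, both tiles contain the parallelogram spanned by \<open>g i\<close> and \<open>g j\<close> at the point whose other
  coordinates are the ceilings at the midpoint of the segment.\<close>

lemma nbr_if_no_crossing:
  assumes u: "grid_vertex u" and z: "grid_vertex z"
    and ij: "i \<noteq> j" "i \<in> S u" "j \<in> S u" "i \<in> S z" "j \<in> S z"
    and vi: "coord u i = coord z i" and vj: "coord u j = coord z j"
    and no_crossing: "\<forall>t. 0 < t \<and> t < 1 \<longrightarrow> (\<forall>k\<in>I - {i, j}. coord (u + t *\<^sub>R (z - u)) k \<notin> \<int>)"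
  shows "(tile u, tile z) \<in> nbr"
proof -
  obtain c where Su: "S u = {i, j, c}" "c \<noteq> i" "c \<noteq> j" using obtain_third_of_S[OF u ij(2,3,1)] .
  obtain c' where Sz: "S z = {i, j, c'}" "c' \<noteq> i" "c' \<noteq> j" using obtain_third_of_S[OF z ij(4,5,1)] .
  have I2: "i \<in> I" "j \<in> I" using ij S_subset[of u] by auto
  define \<Delta> where "\<Delta> k = (z - u) \<bullet> g k" for k
  have coord_z: "coord z k = coord u k + \<Delta> k" for k using coord_diff[of z k u] by (simp add: \<Delta>_def)
  define \<phi> :: "nat \<Rightarrow> real" where "\<phi> k = of_int \<lceil>coord u k + \<Delta> k / 2\<rceil>" for k
  have \<phi>_z: "\<phi> k = of_int \<lceil>coord z k + (- \<Delta> k) / 2\<rceil>" for k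
    by (simp add: \<phi>_def coord_z field_simps)
  have no_Int_u: "\<forall>t. 0 < t \<and> t < 1 \<longrightarrow> coord u k + t * \<Delta> k \<notin> \<int>" if "k \<in> I - {i, j}" for k
    using no_crossing that by (simp add: coord_add \<Delta>_def)
  have no_Int_z: "\<forall>t. 0 < t \<and> t < 1 \<longrightarrow> coord z k + t * (- \<Delta> k) \<notin> \<int>" if "k \<in> I - {i, j}" for k
  proof (intro allI impI)
    fix t :: real assume "0 < t \<and> t < 1"
    moreover have "coord z k + t * (- \<Delta> k) = coord u k + (1 - t) * \<Delta> k" by (simp add: coord_z algebra_simps)
    ultimately show "coord z k + t * (- \<Delta> k) \<notin> \<int>" using no_Int_u[OF that, rule_format, of "1 - t"] by simp
  qed
  have \<phi>_u: "\<phi> k = ceil_coord u k" if "k \<in> I - {i, j, c}" for k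
  proof -
    have "coord u k \<notin> \<int>" using that Su by (auto simp: S_eq)
    thus ?thesis using ceiling_midpoint_eq_if_no_Int_between[OF no_Int_u] that
      by (simp add: \<phi>_def ceil_coord_def)
  qed
  have \<phi>_z': "\<phi> k = ceil_coord z k" if "k \<in> I - {i, j, c'}" for k
  proof -
    have "coord z k \<notin> \<int>" using that Sz by (auto simp: S_eq)
    thus ?thesis using ceiling_midpoint_eq_if_no_Int_between[OF no_Int_z] that
      by (simp add: \<phi>_z ceil_coord_def)
  qed
  have c: "c \<in> I - {i, j}" "c \<in> S u" and c': "c' \<in> I - {i, j}" "c' \<in> S z"
    using Su Sz S_subset[of u] S_subset[of z] by auto
  have \<phi>_c: "\<phi> c - ceil_coord u c \<in> {0, 1}"
    using ceiling_midpoint_if_Int_no_Int_between[OF no_Int_u[OF c(1)]] c(2)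
    by (simp add: \<phi>_def ceil_coord_eq_if_S S_eq)
  have \<phi>_c': "\<phi> c' - ceil_coord z c' \<in> {0, 1}"
    using ceiling_midpoint_if_Int_no_Int_between[OF no_Int_z[OF c'(1)]] c'(2)
    by (simp add: \<phi>_z ceil_coord_eq_if_S S_eq)
  define F where "F si sj = (\<Sum>k\<in>I - {i, j}. \<phi> k *\<^sub>R g k) + (coord u i + si) *\<^sub>R g i + (coord u j + sj) *\<^sub>R g j"
    for si sj
  have F: "F si sj \<in> tile u \<inter> tile z" if "0 \<le> si" "si \<le> 1" "0 \<le> sj" "sj \<le> 1" for si sj
    using face_point_in_tile[OF ij(1) Su ballI[OF \<phi>_u] \<phi>_c that]
      face_point_in_tile[OF ij(1) Sz ballI[OF \<phi>_z'] \<phi>_c' that] by (simp add: F_def vi vj)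
  have "F 0 0 + g i = F 1 0" "F 0 0 + g j = F 0 1" by (simp_all add: F_def algebra_simps)
  hence "{F 0 0, F 0 0 + g i, F 0 0 + g j} \<subseteq> tile u \<inter> tile z" using F[of 0 0] F[of 1 0] F[of 0 1] by auto
  hence "2 \<le> aff_dim (tile u \<inter> tile z)"
    using aff_dim_ge_2_if_triangle independent_g2[OF I2 ij(1)] g_distinct_on_S[OF ij(2,3,1)] by blast
  thus ?thesis using u z tiles_iff by (simp add: nbr_iff) blast
qed

definition nbr_dist_le :: "(real^3) set \<Rightarrow> (real^3) set \<Rightarrow> nat \<Rightarrow> bool" where
  "nbr_dist_le A B n \<longleftrightarrow> (\<exists>m\<le>n. (A, B) \<in> nbr ^^ m)"

lemma nbr_dist_le_refl: "nbr_dist_le A A 0"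
  by (auto simp: nbr_dist_le_def)

lemma nbr_dist_le_mono: "nbr_dist_le A B n \<Longrightarrow> n \<le> n' \<Longrightarrow> nbr_dist_le A B n'"
  unfolding nbr_dist_le_def by (meson le_trans)

lemma nbr_dist_le_trans:
  assumes "nbr_dist_le A B n" "nbr_dist_le B C n'"
  shows "nbr_dist_le A C (n + n')"
proof -
  obtain m m' where m: "m \<le> n" "(A, B) \<in> nbr ^^ m" "m' \<le> n'" "(B, C) \<in> nbr ^^ m'"
    using assms by (auto simp: nbr_dist_le_def)
  hence "(A, C) \<in> nbr ^^ (m + m')" by (auto simp: relpow_add)
  thus ?thesis using m by (auto simp: nbr_dist_le_def intro!: exI[of _ "m + m'"])
qed

lemma nbr_dist_le_if_nbr: "(A, B) \<in> nbr \<Longrightarrow> nbr_dist_le A B 1"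
  unfolding nbr_dist_le_def by (intro exI[of _ 1]) auto

definition crossings :: "nat \<Rightarrow> nat \<Rightarrow> real^3 \<Rightarrow> real^3 \<Rightarrow> real set" where
  "crossings i j u z = {t. 0 < t \<and> t < 1 \<and> (\<exists>k\<in>I - {i, j}. coord (u + t *\<^sub>R (z - u)) k \<in> \<int>)}"

lemma eq_if_three_S_coords_eq:
  assumes "{i, j, k} \<subseteq> S u" "i \<noteq> j" "i \<noteq> k" "j \<noteq> k"
    and "(z - u) \<bullet> g i = 0" "(z - u) \<bullet> g j = 0" "(z - u) \<bullet> g k = 0"
  shows "z = u"
proof -
  have "i \<in> I" "j \<in> I" "k \<in> I" using assms(1) S_subset[of u] by auto
  moreover have "g i \<noteq> g j" "g i \<noteq> g k" "g j \<noteq> g k" using g_distinct_on_S assms(1-4) by auto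
  ultimately have "(g i \<times> g j) \<bullet> g k \<noteq> 0" using triple_product_g_nonzero assms(2-4) by blast
  thus ?thesis using eq_0_if_orthogonal_triple assms(5-7) by fastforce
qed

lemma crossings_finite_card:
  assumes uz: "u \<noteq> z" and ij: "i \<noteq> j" "i \<in> S u" "j \<in> S u"
    and vi: "coord u i = coord z i" and vj: "coord u j = coord z j"
  shows "finite (crossings i j u z)" "real (card (crossings i j u z)) \<le> (\<Sum>k\<in>I - {i, j}. \<bar>(z - u) \<bullet> g k\<bar> + 1)"
proof -
  define C where "C k = {t. 0 < t \<and> t < 1 \<and> coord u k + t * ((z - u) \<bullet> g k) \<in> \<int>}" for k
  have eq: "crossings i j u z = (\<Union>k\<in>I - {i, j}. C k)" unfolding crossings_def C_def coord_add by auto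
  have zi: "(z - u) \<bullet> g i = 0" "(z - u) \<bullet> g j = 0" using vi vj coord_diff[of z i u] coord_diff[of z j u] by simp_all
  have C: "finite (C k) \<and> real (card (C k)) \<le> \<bar>(z - u) \<bullet> g k\<bar> + 1" if k: "k \<in> I - {i, j}" for k
  proof (cases "(z - u) \<bullet> g k = 0")
    case False
    thus ?thesis using card_Int_crossings_le unfolding C_def by blast
  next
    case True
    have "C k = {}"
    proof
      show "C k \<subseteq> {}"
      proof
        fix t assume "t \<in> C k"
        hence "k \<in> S u" using True k by (simp add: C_def S_eq)
        hence "z = u" using eq_if_three_S_coords_eq[of i j k u z] ij k zi True by auto
        thus "t \<in> {}" using uz by simp
      qed
    qed simp
    thus ?thesis by simp
  qed
  show "finite (crossings i j u z)" unfolding eq using C by auto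
  have "real (card (crossings i j u z)) \<le> (\<Sum>k\<in>I - {i, j}. real (card (C k)))"
    unfolding eq using card_UN_le[of "I - {i, j}" C] by (simp flip: of_nat_sum)
  also have "\<dots> \<le> (\<Sum>k\<in>I - {i, j}. \<bar>(z - u) \<bullet> g k\<bar> + 1)" using C by (intro sum_mono) auto
  finally show "real (card (crossings i j u z)) \<le> (\<Sum>k\<in>I - {i, j}. \<bar>(z - u) \<bullet> g k\<bar> + 1)" .
qed

lemma card_crossings_from_crossing_less:
  assumes fin: "finite (crossings i j u z)" and t0: "t0 \<in> crossings i j u z"
  shows "card (crossings i j (u + t0 *\<^sub>R (z - u)) z) < card (crossings i j u z)"
proof -
  define m where "m = u + t0 *\<^sub>R (z - u)"
  have t01: "0 < t0" "t0 < 1" using t0 by (auto simp: crossings_def)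
  \<comment> \<open>The crossings from m are those of the original segment after t0.\<close>
  define f where "f s = t0 + s * (1 - t0)" for s
  have "f ` crossings i j m z \<subseteq> crossings i j u z - {t0}"
  proof
    fix t assume "t \<in> f ` crossings i j m z"
    then obtain s where s: "s \<in> crossings i j m z" "t = f s" by blast
    have "0 < s" "s < 1" using s(1) by (auto simp: crossings_def)
    hence q: "0 < s * (1 - t0)" "s * (1 - t0) < 1 * (1 - t0)" using t01 by simp_all
    have "0 < f s" "f s < 1" "f s \<noteq> t0" unfolding f_def using q t01 by argo+
    moreover have "m + s *\<^sub>R (z - m) = u + f s *\<^sub>R (z - u)" by (simp add: m_def f_def algebra_simps)
    ultimately show "t \<in> crossings i j u z - {t0}" using s unfolding crossings_def by auto
  qed
  moreover have "inj_on f (crossings i j m z)" using t01 by (auto simp: inj_on_def f_def)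
  ultimately have "card (crossings i j m z) \<le> card (crossings i j u z - {t0})"
    using fin by (metis card_image card_mono finite_Diff)
  also have "\<dots> < card (crossings i j u z)" by (rule card_Diff1_less[OF fin t0])
  finally show ?thesis unfolding m_def .
qed

lemma first_crossing:
  assumes u: "grid_vertex u" and uz: "u \<noteq> z" and ij: "i \<noteq> j" "i \<in> S u" "j \<in> S u"
    and vi: "coord u i = coord z i" and vj: "coord u j = coord z j"
    and ne: "crossings i j u z \<noteq> {}"
  defines "m \<equiv> u + Min (crossings i j u z) *\<^sub>R (z - u)"
  shows "grid_vertex m" "m \<noteq> z" "i \<in> S m" "j \<in> S m" "coord m i = coord z i" "coord m j = coord z j"
    "(tile u, tile m) \<in> nbr" "card (crossings i j m z) < card (crossings i j u z)"
proof -
  define t0 where "t0 = Min (crossings i j u z)"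
  have fin: "finite (crossings i j u z)" using crossings_finite_card[OF uz ij vi vj] by blast
  have t0: "t0 \<in> crossings i j u z" using Min_in[OF fin ne] by (simp add: t0_def)
  have t0_min: "t0 \<le> t" if "t \<in> crossings i j u z" for t using Min_le[OF fin that] by (simp add: t0_def)
  have t01: "0 < t0" "t0 < 1" using t0 by (auto simp: crossings_def)
  have zi: "(z - u) \<bullet> g i = 0" "(z - u) \<bullet> g j = 0" using vi vj coord_diff[of z i u] coord_diff[of z j u] by simp_all
  have m_i: "coord m i = coord z i" "coord m j = coord z j"
    using zi vi vj by (simp_all add: m_def t0_def[symmetric] coord_add)
  show "coord m i = coord z i" "coord m j = coord z j" by (fact m_i)+
  obtain k0 where k0: "k0 \<in> I - {i, j}" "coord m k0 \<in> \<int>"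
    using t0 unfolding crossings_def m_def t0_def by blast
  have "{i, j, k0} \<subseteq> S m" using m_i vi vj k0 ij S_subset[of u] by (auto simp: S_eq)
  thus m: "grid_vertex m" "i \<in> S m" "j \<in> S m"
    using k0 ij by (auto intro: grid_vertex_if_subset_S)
  have m_eq: "m = u + t0 *\<^sub>R (z - u)" by (simp add: m_def t0_def)
  have "z - m = (1 - t0) *\<^sub>R (z - u)" by (simp add: m_eq algebra_simps)
  thus "m \<noteq> z" using t01 uz by auto
  have "\<forall>s. 0 < s \<and> s < 1 \<longrightarrow> (\<forall>k\<in>I - {i, j}. coord (u + s *\<^sub>R (m - u)) k \<notin> \<int>)"
  proof (intro allI impI ballI notI)
    fix s k assume s: "0 < s \<and> s < 1" and k: "k \<in> I - {i, j}" and "coord (u + s *\<^sub>R (m - u)) k \<in> \<int>"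
    moreover have "u + s *\<^sub>R (m - u) = u + (s * t0) *\<^sub>R (z - u)" by (simp add: m_eq)
    moreover have "0 < s * t0" "s * t0 < t0" using s t01 by simp_all
    ultimately have "s * t0 \<in> crossings i j u z"
      using t01 k unfolding crossings_def mem_Collect_eq by (metis less_trans)
    thus False using t0_min[of "s * t0"] \<open>s * t0 < t0\<close> by simp
  qed
  thus "(tile u, tile m) \<in> nbr"
    using nbr_if_no_crossing[OF u m(1) ij m(2,3)] m_i vi vj by simp
  show "card (crossings i j m z) < card (crossings i j u z)"
    unfolding m_eq by (rule card_crossings_from_crossing_less[OF fin t0])
qed

lemma nbr_dist_le_crossings:
  assumes "grid_vertex u" "grid_vertex z" "i \<noteq> j" "i \<in> S u" "j \<in> S u" "i \<in> S z" "j \<in> S z"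
    "coord u i = coord z i" "coord u j = coord z j"
  shows "nbr_dist_le (tile u) (tile z) (card (crossings i j u z) + 1)"
  using assms
proof (induction "card (crossings i j u z)" arbitrary: u rule: less_induct)
  case less
  show ?case
  proof (cases "u = z")
    case True
    thus ?thesis using nbr_dist_le_refl nbr_dist_le_mono by blast
  next
    case uz: False
    show ?thesis
    proof (cases "crossings i j u z = {}")
      case True
      hence "(tile u, tile z) \<in> nbr"
        using nbr_if_no_crossing[OF less.prems] unfolding crossings_def by blast
      thus ?thesis using nbr_dist_le_if_nbr True by simp
    next
      case False
      define m where "m = u + Min (crossings i j u z) *\<^sub>R (z - u)"
      note m = first_crossing[OF less.prems(1) uz less.prems(3-5,8,9) False, folded m_def]
      have "nbr_dist_le (tile m) (tile z) (card (crossings i j m z) + 1)"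
        using less.hyps[OF m(8) m(1) less.prems(2,3) m(3,4) less.prems(6,7) m(5,6)] .
      hence "nbr_dist_le (tile u) (tile z) (1 + (card (crossings i j m z) + 1))"
        by (rule nbr_dist_le_trans[OF nbr_dist_le_if_nbr[OF m(7)]])
      thus ?thesis by (rule nbr_dist_le_mono) (use m(8) in simp)
    qed
  qed
qed

lemma nbr_dist_le_along_grid_line:
  assumes u: "grid_vertex u" and z: "grid_vertex z"
    and ij: "i \<noteq> j" "i \<in> S u" "j \<in> S u" "i \<in> S z" "j \<in> S z"
    and vi: "coord u i = coord z i" and vj: "coord u j = coord z j"
  shows "\<exists>n. real n \<le> grid_norm (z - u) + real N + 1 \<and> nbr_dist_le (tile u) (tile z) n"
proof (cases "u = z")
  case True
  thus ?thesis using nbr_dist_le_refl by (intro exI[of _ 0]) (simp add: grid_norm_nonneg)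
next
  case False
  have "real (card (crossings i j u z)) \<le> (\<Sum>k\<in>I - {i, j}. \<bar>(z - u) \<bullet> g k\<bar> + 1)"
    using crossings_finite_card(2)[OF False ij(1-3) vi vj] .
  also have "\<dots> = (\<Sum>k\<in>I - {i, j}. \<bar>(z - u) \<bullet> g k\<bar>) + real (card (I - {i, j}))"
    by (simp add: sum.distrib)
  also have "(\<Sum>k\<in>I - {i, j}. \<bar>(z - u) \<bullet> g k\<bar>) \<le> grid_norm (z - u)"
    unfolding grid_norm_def by (rule sum_mono2) auto
  also have "real (card (I - {i, j})) \<le> real N" using card_mono[of I "I - {i, j}"] by simp
  finally show ?thesis
    using nbr_dist_le_crossings[OF assms] by (intro exI[of _ "card (crossings i j u z) + 1"]) auto
qed

section \<open>Upper bound for the distance between tiles\<close>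

definition delta_max :: real where
  "delta_max = Max ((\<lambda>(i, j, k). delta3 g i j k) ` Sigma I (\<lambda>_. Sigma I (\<lambda>_. I)))"

definition inv_triple_max :: real where
  "inv_triple_max = Max ((\<lambda>(i, j, k). 1 / \<bar>(g i \<times> g j) \<bullet> g k\<bar>) ` Sigma I (\<lambda>_. Sigma I (\<lambda>_. I)))"

lemma delta3_le_delta_max: "i \<in> I \<Longrightarrow> j \<in> I \<Longrightarrow> k \<in> I \<Longrightarrow> delta3 g i j k \<le> delta_max"
  unfolding delta_max_def by (rule Max_ge) force+

lemma inv_triple_le_max: "i \<in> I \<Longrightarrow> j \<in> I \<Longrightarrow> k \<in> I \<Longrightarrow> 1 / \<bar>(g i \<times> g j) \<bullet> g k\<bar> \<le> inv_triple_max"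
  unfolding inv_triple_max_def by (rule Max_ge) force+

lemma delta_max_nonneg: "0 \<le> delta_max"
  using order_trans[OF _ delta3_le_delta_max[of 1 1 1]] N_ge_3 by (simp add: delta3_def)

lemma inv_triple_max_nonneg: "0 \<le> inv_triple_max"
  using order_trans[OF _ inv_triple_le_max[of 1 1 1]] N_ge_3 by simp

lemma abs_inner_g_le_norm: "k \<in> I \<Longrightarrow> \<bar>v \<bullet> g k\<bar> \<le> norm v"
  using Cauchy_Schwarz_ineq2[of v "g k"] norm_g by simp

lemma move_along_grid_line:
  assumes u: "grid_vertex u" and ij: "i \<in> S u" "j \<in> S u" "i \<noteq> j" and k: "k \<in> I"
    and D: "(g i \<times> g j) \<bullet> g k \<noteq> 0" and m: "m \<in> \<int>"
  defines "z \<equiv> u + ((m - coord u k) / ((g i \<times> g j) \<bullet> g k)) *\<^sub>R (g i \<times> g j)"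
  shows "grid_vertex z" "i \<in> S z" "j \<in> S z" "k \<in> S z"
    "coord z i = coord u i" "coord z j = coord u j" "coord z k = m"
    "norm (z - u) \<le> \<bar>m - coord u k\<bar> * delta_max"
    "\<exists>n. real n \<le> grid_norm (z - u) + real N + 1 \<and> nbr_dist_le (tile u) (tile z) n"
proof -
  let ?h = "g i \<times> g j"
  have hij: "?h \<bullet> g i = 0" "?h \<bullet> g j = 0" by (simp_all add: dot_cross_self)
  have kij: "k \<noteq> i" "k \<noteq> j" using D hij by auto
  have I2: "i \<in> I" "j \<in> I" using ij S_subset[of u] by auto
  have coord_z: "coord z q = coord u q + ((m - coord u k) / (?h \<bullet> g k)) * (?h \<bullet> g q)" for q
    by (simp add: z_def coord_add)
  show zi: "coord z i = coord u i" "coord z j = coord u j" using coord_z hij by simp_all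
  show zk: "coord z k = m" using coord_z[of k] D by simp
  show S: "i \<in> S z" "j \<in> S z" "k \<in> S z" using zi zk ij I2 k m by (auto simp: S_eq)
  show z: "grid_vertex z" by (rule grid_vertex_if_subset_S[of i j k]) (use S kij ij(3) in auto)
  have "norm (z - u) = \<bar>m - coord u k\<bar> * delta3 g i j k"
    by (simp add: z_def delta3_def hvec_def abs_divide)
  also have "\<dots> \<le> \<bar>m - coord u k\<bar> * delta_max"
    using delta3_le_delta_max[OF I2 k] by (intro mult_left_mono) auto
  finally show "norm (z - u) \<le> \<bar>m - coord u k\<bar> * delta_max" .
  show "\<exists>n. real n \<le> grid_norm (z - u) + real N + 1 \<and> nbr_dist_le (tile u) (tile z) n"
    using nbr_dist_le_along_grid_line[OF u z ij(3) ij(1,2) S(1,2)] zi by simp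
qed

lemma approach_plane:
  assumes u: "grid_vertex u" and ij: "i \<in> S u" "j \<in> S u" "i \<noteq> j" and k: "k \<in> S v"
    and D: "(g i \<times> g j) \<bullet> g k \<noteq> 0" and uv: "norm (v - u) \<le> R"
  obtains w n where "grid_vertex w" "i \<in> S w" "j \<in> S w" "k \<in> S w"
    "coord w i = coord u i" "coord w j = coord u j" "coord w k = coord v k"
    "norm (v - w) \<le> R + delta_max * R"
    "real n \<le> real N * (delta_max * R) + real N + 1" "nbr_dist_le (tile u) (tile w) n"
proof -
  have kI: "k \<in> I" using k S_subset[of v] by auto
  have "coord v k \<in> \<int>" using k by (simp add: S_eq)
  define w where "w = u + ((coord v k - coord u k) / ((g i \<times> g j) \<bullet> g k)) *\<^sub>R (g i \<times> g j)"
  note w = move_along_grid_line[OF u ij kI D \<open>coord v k \<in> \<int>\<close>, folded w_def]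
  have "\<bar>coord v k - coord u k\<bar> \<le> R"
    using abs_inner_g_le_norm[OF kI, of "v - u"] coord_diff[of v k u] uv by simp
  hence wu: "norm (w - u) \<le> delta_max * R"
    using w(8) delta_max_nonneg by (smt (verit) mult_right_mono mult.commute)
  have "norm (v - w) \<le> norm (v - u) + norm (w - u)" using norm_triangle_ineq4[of "v - u" "w - u"] by simp
  hence vw: "norm (v - w) \<le> R + delta_max * R" using wu uv by simp
  obtain n where n: "real n \<le> grid_norm (w - u) + real N + 1" "nbr_dist_le (tile u) (tile w) n"
    using w(9) by blast
  have "grid_norm (w - u) \<le> real N * (delta_max * R)"
    using grid_norm_le_norm[of "w - u"] wu by (smt (verit) mult_left_mono of_nat_0_le_iff)
  hence "real n \<le> real N * (delta_max * R) + real N + 1" using n(1) by simp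
  thus ?thesis using that[OF w(1-7) vw _ n(2)] by simp
qed

lemma obtain_two_S_avoiding:
  assumes "grid_vertex u"
  obtains x y where "x \<in> S u" "y \<in> S u" "x \<noteq> y" "g x \<noteq> g b" "g y \<noteq> g b"
proof -
  obtain p1 p2 p3 where p: "S u = {p1, p2, p3}" "p1 \<noteq> p2" "p1 \<noteq> p3" "p2 \<noteq> p3"
    using obtain_vertex_planes[OF assms] .
  have gd: "g p1 \<noteq> g p2" "g p1 \<noteq> g p3" "g p2 \<noteq> g p3" using g_distinct_on_S p by auto
  show ?thesis
  proof (cases "g p1 = g b")
    case True
    thus ?thesis using that[of p2 p3] p gd by auto
  next
    case False
    thus ?thesis using that[of p1 p2] that[of p1 p3] p gd by (cases "g p2 = g b") auto
  qed
qed

lemma nbr_dist_le_if_close: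
  assumes "0 \<le> R"
  obtains F where "\<And>u v. grid_vertex u \<Longrightarrow> grid_vertex v \<Longrightarrow> norm (v - u) \<le> R \<Longrightarrow> nbr_dist_le (tile u) (tile v) F"
proof -
  define R1 where "R1 = R + delta_max * R"
  define R2 where "R2 = R1 + delta_max * R1"
  define B where "B = (real N * (delta_max * R) + real N + 1) + (real N * (delta_max * R1) + real N + 1)
      + (real N * R2 + real N + 1)"
  have "nbr_dist_le (tile u) (tile v) (nat \<lceil>B\<rceil>)"
    if u: "grid_vertex u" and v: "grid_vertex v" and uv: "norm (v - u) \<le> R" for u v
  proof -
    obtain a b c where Sv: "S v = {a, b, c}" "a \<noteq> b" "a \<noteq> c" "b \<noteq> c"
      using obtain_vertex_planes[OF v] .
    have abI: "a \<in> I" "b \<in> I" and gab: "g a \<noteq> g b"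
      using Sv S_subset[of v] g_distinct_on_S[of a v b] by auto
    \<comment> \<open>Reach the plane of \<open>a\<close>, then that of \<open>b\<close> along grid lines, and finish along the line \<open>{a, b}\<close>.\<close>
    obtain x y where xy: "x \<in> S u" "y \<in> S u" "x \<noteq> y" "g x \<noteq> g a" "g y \<noteq> g a"
      using obtain_two_S_avoiding[OF u] .
    have xyI: "x \<in> I" "y \<in> I" and gxy: "g x \<noteq> g y" using xy S_subset[of u] g_distinct_on_S by auto
    have "(g x \<times> g y) \<bullet> g a \<noteq> 0" using triple_product_g_nonzero xyI abI xy gxy by metis
    then obtain u1 n1 where u1: "grid_vertex u1" "x \<in> S u1" "y \<in> S u1" "a \<in> S u1"
        "coord u1 a = coord v a" "norm (v - u1) \<le> R1"
        "real n1 \<le> real N * (delta_max * R) + real N + 1" "nbr_dist_le (tile u) (tile u1) n1"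
      using approach_plane[OF u xy(1-3) _ _ uv, of a] Sv unfolding R1_def by blast
    obtain w where w: "w \<in> {x, y}" "g w \<noteq> g b" using gxy by (metis insertCI)
    have wI: "w \<in> I" "w \<noteq> a" "g w \<noteq> g a" using w xy xyI by auto
    have "(g w \<times> g a) \<bullet> g b \<noteq> 0" using triple_product_g_nonzero wI abI w gab Sv by metis
    then obtain u2 n2 where u2: "grid_vertex u2" "a \<in> S u2" "b \<in> S u2"
        "coord u2 a = coord v a" "coord u2 b = coord v b" "norm (v - u2) \<le> R2"
        "real n2 \<le> real N * (delta_max * R1) + real N + 1" "nbr_dist_le (tile u1) (tile u2) n2"
      using approach_plane[OF u1(1) _ u1(4) wI(2) _ _ u1(6), of b] w u1(2,3,5) Sv
      unfolding R2_def by (metis insertCI empty_iff insertE)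
    obtain n3 where n3: "real n3 \<le> grid_norm (v - u2) + real N + 1" "nbr_dist_le (tile u2) (tile v) n3"
      using nbr_dist_le_along_grid_line[OF u2(1) v Sv(2) u2(2,3)] u2(4,5) Sv(1) by auto
    have "grid_norm (v - u2) \<le> real N * R2"
      using grid_norm_le_norm[of "v - u2"] u2(6) by (smt (verit) mult_left_mono of_nat_0_le_iff)
    hence "real (n1 + n2 + n3) \<le> B" using u1(7) u2(7) n3(1) by (simp add: B_def)
    hence "n1 + n2 + n3 \<le> nat \<lceil>B\<rceil>" by linarith
    thus ?thesis
      using nbr_dist_le_trans[OF nbr_dist_le_trans[OF u1(8) u2(8)] n3(2)] nbr_dist_le_mono by blast
  qed
  thus ?thesis using that by blast
qed

lemma exists_vertex_near:
  assumes ij: "i \<in> I" "j \<in> I" "g i \<noteq> g j"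
  obtains x where "grid_vertex x" "i \<in> S x" "j \<in> S x" "norm (x - q) \<le> 3 * inv_triple_max"
proof -
  obtain c where c: "c \<in> I" "g c \<noteq> g i" "g c \<noteq> g j" using obtain_third_direction[OF ij(3)] .
  have ne: "i \<noteq> j" "i \<noteq> c" "j \<noteq> c" using ij c by auto
  have D: "(g i \<times> g j) \<bullet> g c \<noteq> 0" using triple_product_g_nonzero ij c ne by metis
  define \<alpha> \<beta> \<delta> where "\<alpha> = of_int \<lceil>coord q i\<rceil> - coord q i" and "\<beta> = of_int \<lceil>coord q j\<rceil> - coord q j"
    and "\<delta> = of_int \<lceil>coord q c\<rceil> - coord q c"
  have ab: "0 \<le> \<alpha>" "\<alpha> \<le> 1" "0 \<le> \<beta>" "\<beta> \<le> 1" "0 \<le> \<delta>" "\<delta> \<le> 1"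
    unfolding \<alpha>_def \<beta>_def \<delta>_def by linarith+
  \<comment> \<open>Round the three coordinates \<open>i, j, c\<close> of \<open>q\<close> up.\<close>
  define d where "d = (1 / ((g i \<times> g j) \<bullet> g c)) *\<^sub>R (\<alpha> *\<^sub>R (g j \<times> g c) + \<beta> *\<^sub>R (g c \<times> g i) + \<delta> *\<^sub>R (g i \<times> g j))"
  have "coord (q + d) i \<in> \<int>" "coord (q + d) j \<in> \<int>" "coord (q + d) c \<in> \<int>"
    using cramer3[OF D, of \<alpha> \<beta> \<delta>] by (simp_all add: d_def coord_add \<alpha>_def \<beta>_def \<delta>_def)
  hence S: "{i, j, c} \<subseteq> S (q + d)" using ij c by (auto simp: S_eq)
  have "norm d \<le> (\<bar>\<alpha>\<bar> + \<bar>\<beta>\<bar> + \<bar>\<delta>\<bar>) / \<bar>(g i \<times> g j) \<bullet> g c\<bar>"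
    unfolding d_def using norm_cramer3_le ij c norm_g by simp
  also have "\<dots> \<le> 3 * (1 / \<bar>(g i \<times> g j) \<bullet> g c\<bar>)" using ab D by (simp add: divide_right_mono)
  also have "\<dots> \<le> 3 * inv_triple_max" using inv_triple_le_max[OF ij(1,2) c(1)] by simp
  finally show ?thesis
    using that[of "q + d"] S ne grid_vertex_if_subset_S[OF S ne] by simp
qed

lemma walk_along_grid_line:
  assumes x: "grid_vertex x" "i \<in> S x" "j \<in> S x" "i \<noteq> j" and c: "c \<in> I"
    and D: "(g i \<times> g j) \<bullet> g c \<noteq> 0"
  obtains z n where "grid_vertex z" "norm (z - (x + \<mu> *\<^sub>R (g i \<times> g j))) \<le> delta_max"
    "real n \<le> grid_norm (\<mu> *\<^sub>R (g i \<times> g j)) + real N * delta_max + real N + 1"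
    "nbr_dist_le (tile x) (tile z) n"
proof -
  let ?h = "g i \<times> g j"
  define q where "q = x + \<mu> *\<^sub>R ?h"
  define m :: real where "m = of_int \<lceil>coord q c\<rceil>"
  define z where "z = x + ((m - coord x c) / (?h \<bullet> g c)) *\<^sub>R ?h"
  have "m \<in> \<int>" by (simp add: m_def)
  note z = move_along_grid_line[OF x c D this, folded z_def]
  have I2: "i \<in> I" "j \<in> I" using x S_subset[of x] by auto
  have "z - q = ((m - coord x c) / (?h \<bullet> g c) - \<mu>) *\<^sub>R ?h" by (simp add: z_def q_def algebra_simps)
  also have "(m - coord x c) / (?h \<bullet> g c) - \<mu> = (m - coord q c) / (?h \<bullet> g c)"
    using D by (simp add: q_def coord_add field_simps)
  finally have "norm (z - q) = \<bar>m - coord q c\<bar> * delta3 g i j c"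
    by (simp add: delta3_def hvec_def abs_divide)
  also have "\<dots> \<le> 1 * delta_max"
  proof (rule mult_mono)
    show "\<bar>m - coord q c\<bar> \<le> 1" unfolding m_def by linarith
  qed (use delta3_le_delta_max[OF I2 c] in \<open>auto simp: delta3_def\<close>)
  finally have zq: "norm (z - q) \<le> delta_max" by simp
  obtain n where n: "real n \<le> grid_norm (z - x) + real N + 1" "nbr_dist_le (tile x) (tile z) n"
    using z(9) by blast
  have "grid_norm (z - x) \<le> grid_norm (\<mu> *\<^sub>R ?h) + grid_norm (z - q)"
    using grid_norm_triangle[of "\<mu> *\<^sub>R ?h" "z - q"] by (simp add: q_def)
  also have "grid_norm (z - q) \<le> real N * delta_max"
    using grid_norm_le_norm[of "z - q"] zq by (smt (verit) mult_left_mono of_nat_0_le_iff)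
  finally show ?thesis using that[OF z(1) zq[unfolded q_def] _ n(2)] n(1) by simp
qed

lemma walk_along_ball_vertex:
  obtains E K where "0 \<le> E" "0 \<le> K"
    "\<And>\<rho> \<alpha> u. \<rho> \<in> ball_vertices \<Longrightarrow> 0 \<le> \<alpha> \<Longrightarrow> grid_vertex u \<Longrightarrow>
      \<exists>v n. grid_vertex v \<and> norm (v - (u + \<alpha> *\<^sub>R \<rho>)) \<le> E \<and> real n \<le> \<alpha> + K \<and> nbr_dist_le (tile u) (tile v) n"
proof -
  obtain F where F: "\<And>u v. grid_vertex u \<Longrightarrow> grid_vertex v \<Longrightarrow> norm (v - u) \<le> 3 * inv_triple_max
      \<Longrightarrow> nbr_dist_le (tile u) (tile v) F"
    using nbr_dist_le_if_close[of "3 * inv_triple_max"] inv_triple_max_nonneg by auto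
  define E where "E = delta_max + 3 * inv_triple_max"
  define K where "K = real F + real N * delta_max + real N + 1"
  have EK: "0 \<le> E" "0 \<le> K" using delta_max_nonneg inv_triple_max_nonneg by (simp_all add: E_def K_def)
  have "\<exists>v n. grid_vertex v \<and> norm (v - (u + \<alpha> *\<^sub>R \<rho>)) \<le> E \<and> real n \<le> \<alpha> + K \<and> nbr_dist_le (tile u) (tile v) n"
    if \<rho>: "\<rho> \<in> ball_vertices" and \<alpha>: "0 \<le> \<alpha>" and u: "grid_vertex u" for \<rho> \<alpha> u
  proof -
    obtain s i j where \<rho>_eq: "\<rho> = s *\<^sub>R ((1 / grid_norm (g i \<times> g j)) *\<^sub>R (g i \<times> g j))"
        and sij: "s \<in> {1, -1}" "1 \<le> i" "i < j" "j \<le> N"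
      using \<rho> unfolding ball_vertices_def by blast
    let ?h = "g i \<times> g j"
    show ?thesis
    proof (cases "?h = 0")
      case True
      thus ?thesis using u nbr_dist_le_refl EK \<alpha> \<rho>_eq by (intro exI[of _ u] exI[of _ 0]) auto
    next
      case False
      have ij: "i \<in> I" "j \<in> I" "i \<noteq> j" "g i \<noteq> g j" using sij False by auto
      obtain c where c: "c \<in> I" "g c \<noteq> g i" "g c \<noteq> g j" using obtain_third_direction[OF ij(4)] .
      have D: "?h \<bullet> g c \<noteq> 0" using triple_product_g_nonzero ij c by (metis)
      obtain x where x: "grid_vertex x" "i \<in> S x" "j \<in> S x" "norm (x - u) \<le> 3 * inv_triple_max"
        using exists_vertex_near[OF ij(1,2,4)] .
      have \<alpha>\<rho>: "\<alpha> *\<^sub>R \<rho> = (\<alpha> * s / grid_norm ?h) *\<^sub>R ?h" using \<rho>_eq by simp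
      obtain z n where z: "grid_vertex z" "norm (z - (x + \<alpha> *\<^sub>R \<rho>)) \<le> delta_max"
          "real n \<le> grid_norm (\<alpha> *\<^sub>R \<rho>) + real N * delta_max + real N + 1" "nbr_dist_le (tile x) (tile z) n"
        using walk_along_grid_line[OF x(1-3) ij(3) c(1) D] unfolding \<alpha>\<rho> by blast
      have "z - (u + \<alpha> *\<^sub>R \<rho>) = (z - (x + \<alpha> *\<^sub>R \<rho>)) + (x - u)" by simp
      hence "norm (z - (u + \<alpha> *\<^sub>R \<rho>)) \<le> norm (z - (x + \<alpha> *\<^sub>R \<rho>)) + norm (x - u)"
        by (metis norm_triangle_ineq)
      hence "norm (z - (u + \<alpha> *\<^sub>R \<rho>)) \<le> E" using z(2) x(4) by (simp add: E_def)
      moreover have "grid_norm (\<alpha> *\<^sub>R \<rho>) \<le> \<alpha>"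
        using grid_norm_ball_vertex_le_1[OF \<rho>] \<alpha> by (simp add: grid_norm_scaleR mult_left_le)
      hence "real (F + n) \<le> \<alpha> + K" using z(3) by (simp add: K_def)
      moreover have "nbr_dist_le (tile u) (tile z) (F + n)"
        using nbr_dist_le_trans[OF F[OF u x(1,4)] z(4)] .
      ultimately show ?thesis using z(1) by blast
    qed
  qed
  thus ?thesis using that EK by blast
qed

lemma walk_along_combination:
  assumes walk: "\<And>\<rho> \<alpha> u. \<rho> \<in> ball_vertices \<Longrightarrow> 0 \<le> \<alpha> \<Longrightarrow> grid_vertex u \<Longrightarrow>
      \<exists>v n. grid_vertex v \<and> norm (v - (u + \<alpha> *\<^sub>R \<rho>)) \<le> E \<and> real n \<le> \<alpha> + K \<and> nbr_dist_le (tile u) (tile v) n"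
    and A: "finite A" "A \<subseteq> ball_vertices" and \<alpha>: "\<forall>\<rho>\<in>A. 0 \<le> \<alpha> \<rho>" and u: "grid_vertex u"
  shows "\<exists>v n. grid_vertex v \<and> norm (v - (u + (\<Sum>\<rho>\<in>A. \<alpha> \<rho> *\<^sub>R \<rho>))) \<le> real (card A) * E
    \<and> real n \<le> (\<Sum>\<rho>\<in>A. \<alpha> \<rho>) + real (card A) * K \<and> nbr_dist_le (tile u) (tile v) n"
  using A \<alpha>
proof (induction A rule: finite_induct)
  case empty
  thus ?case using u nbr_dist_le_refl by (intro exI[of _ u] exI[of _ 0]) auto
next
  case (insert r A)
  have "A \<subseteq> ball_vertices" "\<forall>\<rho>\<in>A. 0 \<le> \<alpha> \<rho>" using insert.prems by auto
  then obtain v1 n1 where v1: "grid_vertex v1" "norm (v1 - (u + (\<Sum>\<rho>\<in>A. \<alpha> \<rho> *\<^sub>R \<rho>))) \<le> real (card A) * E"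
      "real n1 \<le> (\<Sum>\<rho>\<in>A. \<alpha> \<rho>) + real (card A) * K" "nbr_dist_le (tile u) (tile v1) n1"
    using insert.IH by blast
  have "r \<in> ball_vertices" "0 \<le> \<alpha> r" using insert.prems by auto
  then obtain v n2 where v: "grid_vertex v" "norm (v - (v1 + \<alpha> r *\<^sub>R r)) \<le> E"
      "real n2 \<le> \<alpha> r + K" "nbr_dist_le (tile v1) (tile v) n2"
    using walk v1(1) by blast
  have card: "real (card (insert r A)) = real (card A) + 1" using insert.hyps by simp
  have "v - (u + (\<Sum>\<rho>\<in>insert r A. \<alpha> \<rho> *\<^sub>R \<rho>)) = (v - (v1 + \<alpha> r *\<^sub>R r)) + (v1 - (u + (\<Sum>\<rho>\<in>A. \<alpha> \<rho> *\<^sub>R \<rho>)))"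
    using insert.hyps by (simp add: algebra_simps)
  hence "norm (v - (u + (\<Sum>\<rho>\<in>insert r A. \<alpha> \<rho> *\<^sub>R \<rho>)))
      \<le> norm (v - (v1 + \<alpha> r *\<^sub>R r)) + norm (v1 - (u + (\<Sum>\<rho>\<in>A. \<alpha> \<rho> *\<^sub>R \<rho>)))"
    by (simp only: norm_triangle_ineq)
  hence "norm (v - (u + (\<Sum>\<rho>\<in>insert r A. \<alpha> \<rho> *\<^sub>R \<rho>))) \<le> real (card (insert r A)) * E"
    using v(2) v1(2) unfolding card by (simp add: distrib_right)
  moreover have "real (n1 + n2) \<le> (\<Sum>\<rho>\<in>insert r A. \<alpha> \<rho>) + real (card (insert r A)) * K"
    using v1(3) v(3) insert.hyps unfolding card by (simp add: distrib_right)
  ultimately show ?case using v(1) nbr_dist_le_trans[OF v1(4) v(4)] by blast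
qed

lemma nbr_dist_le_grid_norm:
  obtains C where "0 \<le> C"
    "\<And>p q. grid_vertex p \<Longrightarrow> grid_vertex q \<Longrightarrow>
      \<exists>n. real n \<le> grid_norm (q - p) + C \<and> nbr_dist_le (tile p) (tile q) n"
proof -
  obtain E K where EK: "0 \<le> E" "0 \<le> K" and walk: "\<And>\<rho> \<alpha> u. \<rho> \<in> ball_vertices \<Longrightarrow> 0 \<le> \<alpha> \<Longrightarrow> grid_vertex u \<Longrightarrow>
      \<exists>v n. grid_vertex v \<and> norm (v - (u + \<alpha> *\<^sub>R \<rho>)) \<le> E \<and> real n \<le> \<alpha> + K \<and> nbr_dist_le (tile u) (tile v) n"
    using walk_along_ball_vertex by blast
  let ?R = "real (card ball_vertices) * E"
  obtain F where F: "\<And>u v. grid_vertex u \<Longrightarrow> grid_vertex v \<Longrightarrow> norm (v - u) \<le> ?R \<Longrightarrow> nbr_dist_le (tile u) (tile v) F"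
    using nbr_dist_le_if_close[of ?R] EK by auto
  define C where "C = real (card ball_vertices) * K + real F"
  have "\<exists>n. real n \<le> grid_norm (q - p) + C \<and> nbr_dist_le (tile p) (tile q) n"
    if p: "grid_vertex p" and q: "grid_vertex q" for p q
  proof (cases "q = p")
    case True
    thus ?thesis using EK nbr_dist_le_refl by (intro exI[of _ 0]) (simp add: grid_norm_nonneg C_def)
  next
    case False
    \<comment> \<open>Write \<open>q - p\<close> as a nonnegative combination of the vertices of the grid norm ball with total
      weight \<open>grid_norm (q - p)\<close> and walk along each of them in turn.\<close>
    let ?w = "q - p"
    have nw: "0 < grid_norm ?w" using False grid_norm_pos by simp
    hence "grid_norm ((1 / grid_norm ?w) *\<^sub>R ?w) = 1" using False by (simp add: grid_norm_scaleR)
    hence "(1 / grid_norm ?w) *\<^sub>R ?w \<in> convex hull ball_vertices" by (rule in_convex_hull_ball_vertices_if_grid_norm_1)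
    then obtain c where c: "\<forall>x\<in>ball_vertices. 0 \<le> c x" "sum c ball_vertices = 1"
        "(\<Sum>x\<in>ball_vertices. c x *\<^sub>R x) = (1 / grid_norm ?w) *\<^sub>R ?w"
      unfolding convex_hull_finite[OF finite_ball_vertices] by blast
    have "(\<Sum>\<rho>\<in>ball_vertices. (grid_norm ?w * c \<rho>) *\<^sub>R \<rho>) = grid_norm ?w *\<^sub>R (\<Sum>x\<in>ball_vertices. c x *\<^sub>R x)"
      by (simp add: scaleR_sum_right)
    also have "\<dots> = ?w" using c(3) nw by simp
    finally have "(\<Sum>\<rho>\<in>ball_vertices. (grid_norm ?w * c \<rho>) *\<^sub>R \<rho>) = ?w" .
    moreover have "(\<Sum>\<rho>\<in>ball_vertices. grid_norm ?w * c \<rho>) = grid_norm ?w"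
      using c(2) by (simp add: sum_distrib_left[symmetric])
    moreover have "\<exists>v n. grid_vertex v \<and> norm (v - (p + (\<Sum>\<rho>\<in>ball_vertices. (grid_norm ?w * c \<rho>) *\<^sub>R \<rho>))) \<le> ?R
        \<and> real n \<le> (\<Sum>\<rho>\<in>ball_vertices. grid_norm ?w * c \<rho>) + real (card ball_vertices) * K
        \<and> nbr_dist_le (tile p) (tile v) n"
      using c(1) nw by (intro walk_along_combination[where E = E and K = K] walk finite_ball_vertices p) auto
    ultimately obtain v n where v: "grid_vertex v" "norm (v - q) \<le> ?R"
        "real n \<le> grid_norm ?w + real (card ball_vertices) * K" "nbr_dist_le (tile p) (tile v) n"
      by auto
    have "nbr_dist_le (tile p) (tile q) (n + F)"
      using nbr_dist_le_trans[OF v(4) F[OF v(1) q]] v(2) by (simp add: norm_minus_commute)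
    moreover have "real (n + F) \<le> grid_norm ?w + C" using v(3) by (simp add: C_def)
    ultimately show ?thesis by blast
  qed
  moreover have "0 \<le> C" using EK by (simp add: C_def)
  ultimately show ?thesis using that by blast
qed

lemma inj_frame_op: "inj frame_op"
proof (rule injI)
  fix a b assume "frame_op a = frame_op b"
  hence "frame_op (a - b) = 0" using linear_diff[OF linear_frame_op] by simp
  hence "(a - b) \<bullet> frame_op (a - b) = 0" by simp
  hence "(\<Sum>k\<in>I. ((a - b) \<bullet> g k)\<^sup>2) = 0" by (simp add: frame_op_def inner_sum_right power2_eq_square)
  hence "grid_norm (a - b) = 0" by (simp add: grid_norm_def sum_nonneg_eq_0_iff)
  thus "a = b" by simp
qed

lemma convex_hull_growth_vertices: "convex hull (growth_vertices g N) = frame_op ` {v. grid_norm v \<le> 1}"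
  unfolding growth_vertices_eq_frame_op_image grid_norm_ball_eq_convex_hull
    convex_hull_linear_image[OF linear_frame_op] ..

lemma frame_op_in_growth_form:
  assumes v: "grid_norm v = 1"
  shows "frame_op v \<in> frontier (convex hull (growth_vertices g N))"
proof -
  have "frame_op v \<notin> interior (frame_op ` {v. grid_norm v \<le> 1})"
  proof
    assume "frame_op v \<in> interior (frame_op ` {v. grid_norm v \<le> 1})"
    then obtain e where e: "0 < e" "ball (frame_op v) e \<subseteq> frame_op ` {v. grid_norm v \<le> 1}"
      unfolding mem_interior by blast
    define \<delta> where "\<delta> = e / (2 * (norm (frame_op v) + 1))"
    have \<delta>: "0 < \<delta>" using e by (simp add: \<delta>_def add_nonneg_pos)
    have "dist (frame_op v) ((1 + \<delta>) *\<^sub>R frame_op v) = e * (norm (frame_op v) / (2 * (norm (frame_op v) + 1)))"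
      using \<delta> e(1) by (simp add: dist_norm algebra_simps \<delta>_def)
    also have "\<dots> < e" using e by (simp add: divide_less_eq add_nonneg_pos)
    finally obtain v' where "grid_norm v' \<le> 1" "frame_op ((1 + \<delta>) *\<^sub>R v) = frame_op v'"
      using e(2) by (auto simp: frame_op_scaleR)
    moreover have "grid_norm ((1 + \<delta>) *\<^sub>R v) = 1 + \<delta>" using v \<delta> by (simp add: grid_norm_scaleR)
    ultimately show False using inj_frame_op \<delta> by (metis injD add_le_same_cancel1 not_le)
  qed
  thus ?thesis using v
    by (auto simp: frontier_def convex_hull_growth_vertices intro: closure_subset[THEN subsetD])
qed

lemma frame_op_near_scaled_growth_form:
  obtains R where "\<And>w n. \<bar>grid_norm w - real n\<bar> \<le> C \<Longrightarrow>
    \<exists>z\<in>frontier (convex hull (growth_vertices g N)). norm (frame_op w - real n *\<^sub>R z) \<le> R"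
proof -
  obtain v0 :: "real^3" where v0: "v0 \<noteq> 0" using axis_eq_0_iff[of 1 "1::real"] by fastforce
  define z0 where "z0 = frame_op ((1 / grid_norm v0) *\<^sub>R v0)"
  have z0: "z0 \<in> frontier (convex hull (growth_vertices g N))"
    unfolding z0_def using v0 grid_norm_nonneg[of v0] by (intro frame_op_in_growth_form) (simp add: grid_norm_scaleR)
  have "\<exists>z\<in>frontier (convex hull (growth_vertices g N)). norm (frame_op w - real n *\<^sub>R z) \<le> C * (1 + norm z0)"
    if wn: "\<bar>grid_norm w - real n\<bar> \<le> C" for w n
  proof (cases "w = 0")
    case True
    hence "real n \<le> C" "0 \<le> C" using wn by simp_all
    hence "real n * norm z0 \<le> C + C * norm z0" by (simp add: add_increasing mult_right_mono)
    hence "norm (frame_op w - real n *\<^sub>R z0) \<le> C * (1 + norm z0)"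
      using True by (simp add: linear_0[OF linear_frame_op] algebra_simps)
    thus ?thesis using z0 by blast
  next
    case False
    hence pos: "0 < grid_norm w" by (rule grid_norm_pos)
    define z where "z = frame_op ((1 / grid_norm w) *\<^sub>R w)"
    have zF: "z \<in> frontier (convex hull (growth_vertices g N))"
      unfolding z_def using pos False by (intro frame_op_in_growth_form) (simp add: grid_norm_scaleR)
    have "frame_op w - real n *\<^sub>R z = ((grid_norm w - real n) / grid_norm w) *\<^sub>R frame_op w"
      using pos False by (simp add: z_def frame_op_scaleR algebra_simps diff_divide_distrib)
    hence "norm (frame_op w - real n *\<^sub>R z) = \<bar>grid_norm w - real n\<bar> * (norm (frame_op w) / grid_norm w)"
      using pos by (simp add: abs_divide)
    also have "\<dots> \<le> C * 1"
      using wn norm_frame_op_le[of w] pos by (intro mult_mono) (auto simp: divide_le_eq)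
    also have "\<dots> \<le> C * (1 + norm z0)" using wn by (intro mult_left_mono) auto
    finally show ?thesis using zF by blast
  qed
  thus ?thesis using that by blast
qed

lemma shell_grid_norm_close:
  assumes P0: "finite P0" "P0 \<subseteq> tiles" and Ts: "Ts \<in> P0"
  obtains C where "\<And>n T. T \<in> coord_shell tiles P0 n \<Longrightarrow>
    \<bar>grid_norm (tile_point T - tile_point Ts) - real n\<bar> \<le> C"
proof -
  obtain Cu where Cu: "0 \<le> Cu" "\<And>p q. grid_vertex p \<Longrightarrow> grid_vertex q \<Longrightarrow>
      \<exists>n. real n \<le> grid_norm (q - p) + Cu \<and> nbr_dist_le (tile p) (tile q) n"
    using nbr_dist_le_grid_norm by blast
  define M where "M = Max ((\<lambda>T0. grid_norm (tile_point T0 - tile_point Ts)) ` P0)"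
  have M: "grid_norm (tile_point T0 - tile_point Ts) \<le> M" if "T0 \<in> P0" for T0
    unfolding M_def using P0(1) that by (intro Max_ge) auto
  have "\<bar>grid_norm (tile_point T - tile_point Ts) - real n\<bar> \<le> Cu + 2 * real N + M"
    if T: "T \<in> coord_shell tiles P0 n" for n T
  proof -
    let ?w = "tile_point T - tile_point Ts"
    obtain T0 where T0: "T0 \<in> P0" "(T0, T) \<in> nbr ^^ n" using coord_shellD(2)[OF T] by blast
    have "grid_norm ?w \<le> grid_norm (tile_point T - tile_point T0) + grid_norm (tile_point T0 - tile_point Ts)"
      using grid_norm_triangle[of "tile_point T - tile_point T0" "tile_point T0 - tile_point Ts"] by simp
    hence lower: "grid_norm ?w \<le> real n + 2 * real N + M"
      using grid_norm_le_relpow[OF T0(2)] M[OF T0(1)] by simp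
    have vertices: "grid_vertex (tile_point Ts)" "grid_vertex (tile_point T)"
        "tile (tile_point Ts) = Ts" "tile (tile_point T) = T"
      using tile_point P0(2) Ts coord_shellD(1)[OF T] by auto
    obtain m where m: "real m \<le> grid_norm ?w + Cu" "nbr_dist_le Ts T m"
      using Cu(2)[OF vertices(1,2)] vertices(3,4) by auto
    then obtain m' where m': "m' \<le> m" "(Ts, T) \<in> nbr ^^ m'" by (auto simp: nbr_dist_le_def)
    hence "\<not> m' < n" using coord_shellD(3)[OF T _ Ts] by blast
    hence "real n \<le> grid_norm ?w + Cu" using m'(1) m(1) by linarith
    thus ?thesis using lower Cu(1) M[OF Ts] grid_norm_nonneg[of "tile_point Ts - tile_point Ts"] by linarith
  qed
  thus ?thesis using that by blast
qed

lemma growth_form_bound: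
  assumes P0: "finite P0" "P0 \<noteq> {}" "P0 \<subseteq> tiles"
  shows "\<exists>x C. \<forall>n. \<forall>T\<in>coord_shell tiles P0 n. \<forall>y\<in>T.
           \<exists>z\<in>frontier (convex hull (growth_vertices g N)). dist y (x + real n *\<^sub>R z) \<le> C"
proof -
  obtain Ts where Ts: "Ts \<in> P0" using P0(2) by blast
  obtain C where C: "\<And>n T. T \<in> coord_shell tiles P0 n \<Longrightarrow>
      \<bar>grid_norm (tile_point T - tile_point Ts) - real n\<bar> \<le> C"
    using shell_grid_norm_close[OF P0(1,3) Ts] by blast
  obtain R where R: "\<And>w n. \<bar>grid_norm w - real n\<bar> \<le> C \<Longrightarrow>
      \<exists>z\<in>frontier (convex hull (growth_vertices g N)). norm (frame_op w - real n *\<^sub>R z) \<le> R"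
    using frame_op_near_scaled_growth_form by blast
  define x where "x = frame_op (tile_point Ts) - (\<Sum>k\<in>I. \<gamma> k *\<^sub>R g k)"
  have "\<exists>z\<in>frontier (convex hull (growth_vertices g N)). dist y (x + real n *\<^sub>R z) \<le> 2 * real N + R"
    if T: "T \<in> coord_shell tiles P0 n" and y: "y \<in> T" for n T y
  proof -
    let ?w = "tile_point T - tile_point Ts"
    have "y \<in> tile_box (tile_point T)"
      using y tile_point(2)[OF coord_shellD(1)[OF T]] tile_subset_tile_box by blast
    hence near: "norm (y - (x + frame_op ?w)) \<le> 2 * real N"
      using tile_box_near unfolding sum_coord_eq_frame_op
      by (simp add: x_def linear_diff[OF linear_frame_op] algebra_simps)
    obtain z where z: "z \<in> frontier (convex hull (growth_vertices g N))"
        "norm (frame_op ?w - real n *\<^sub>R z) \<le> R"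
      using R[OF C[OF T]] by blast
    have "dist y (x + real n *\<^sub>R z) \<le> norm (y - (x + frame_op ?w)) + norm (frame_op ?w - real n *\<^sub>R z)"
      unfolding dist_norm by (rule order_trans[OF _ norm_triangle_ineq]) (simp add: algebra_simps)
    hence "dist y (x + real n *\<^sub>R z) \<le> 2 * real N + R" using near z(2) by linarith
    thus ?thesis using z(1) by blast
  qed
  thus ?thesis by blast
qed

end

section \<open>Grids with only two directions\<close>

text \<open>The hypotheses of the theorem only constrain the sets \<open>{g i, g j, g k}\<close>, so they allow the \<open>g i\<close>
  to take just two values \<open>u\<^sub>1, u\<^sub>2\<close>. Then every \<open>h\<^sub>i\<^sub>j\<close> is orthogonal to all \<open>g k\<close>, the growth form
  degenerates to \<open>{0}\<close>, and indeed neighbouring tiles have the same box.\<close>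

context grid3
begin

lemma obtain_two_directions:
  assumes "\<not> (\<exists>a\<in>I. \<exists>b\<in>I. \<exists>c\<in>I. g a \<noteq> g b \<and> g a \<noteq> g c \<and> g b \<noteq> g c)"
  obtains u1 u2 where "independent {u1, u2}" "u1 \<noteq> u2" "\<forall>k\<in>I. g k = u1 \<or> g k = u2"
proof -
  have one: "1 \<in> I" using N_ge_3 by auto
  show ?thesis
  proof (cases "\<exists>b\<in>I. g b \<noteq> g 1")
    case True
    then obtain b where b: "b \<in> I" "g b \<noteq> g 1" by blast
    have "g k = g 1 \<or> g k = g b" if k: "k \<in> I" for k
    proof (rule ccontr)
      assume "\<not> (g k = g 1 \<or> g k = g b)"
      hence "g 1 \<noteq> g b" "g 1 \<noteq> g k" "g b \<noteq> g k" using b by auto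
      thus False using assms one b(1) k by blast
    qed
    moreover have "independent {g 1, g b}" using independent_g2[OF one b(1)] b by auto
    ultimately show ?thesis using that[of "g 1" "g b"] b(2) by (metis ballI)
  next
    case False
    have "dim {g 1} < DIM(real^3)" using dim_le_card[of "{g 1}" "{g 1}"] by (simp add: span_base)
    then obtain d where d: "d \<noteq> 0" "\<And>y. y \<in> span {g 1} \<Longrightarrow> orthogonal d y"
      using orthogonal_to_subspace_exists by blast
    have "d \<notin> span {g 1}"
    proof
      assume "d \<in> span {g 1}"
      hence "orthogonal d d" by (rule d(2))
      thus False using d(1) by (simp add: orthogonal_def)
    qed
    moreover have "independent {g 1}" using g_nonzero[OF one] by (simp add: independent_insert)
    ultimately have "independent {g 1, d}" by (simp add: independent_insert insert_commute)
    moreover have "g 1 \<noteq> d" using \<open>d \<notin> span {g 1}\<close> by (auto intro: span_base)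
    moreover have "\<forall>k\<in>I. g k = g 1 \<or> g k = d" using False by blast
    ultimately show ?thesis by (rule that)
  qed
qed

lemma sum_two_directions:
  assumes "\<forall>k\<in>I. g k = u1 \<or> g k = u2"
  shows "(\<Sum>k\<in>I. t k *\<^sub>R g k) = (\<Sum>k\<in>I \<inter> {k. g k = u1}. t k) *\<^sub>R u1 + (\<Sum>k\<in>I - {k. g k = u1}. t k) *\<^sub>R u2"
proof -
  have "(\<Sum>k\<in>I. t k *\<^sub>R g k) = (\<Sum>k\<in>I \<inter> {k. g k = u1}. t k *\<^sub>R g k) + (\<Sum>k\<in>I - {k. g k = u1}. t k *\<^sub>R g k)"
    by (rule sum.Int_Diff) simp
  also have "\<dots> = (\<Sum>k\<in>I \<inter> {k. g k = u1}. t k *\<^sub>R u1) + (\<Sum>k\<in>I - {k. g k = u1}. t k *\<^sub>R u2)"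
    using assms by (intro arg_cong2[where f = "(+)"] sum.cong) auto
  finally show ?thesis by (simp add: scaleR_sum_left)
qed

lemma inner_le_0_if_common_plane:
  assumes u: "independent {u1, u2}" "u1 \<noteq> u2" "\<forall>k\<in>I. g k = u1 \<or> g k = u2"
    and X: "X \<subseteq> tile_box p" "X \<subseteq> tile_box q" and dim: "2 \<le> aff_dim X"
  shows "(p - q) \<bullet> u1 \<le> 0"
proof (rule ccontr)
  assume "\<not> (p - q) \<bullet> u1 \<le> 0"
  \<comment> \<open>Then the \<open>u\<^sub>1\<close>-coordinate is the same on both boxes, so X lies on a line parallel to \<open>u\<^sub>2\<close>.\<close>
  hence pos: "0 < (p - q) \<bullet> u1" by simp
  have hi_le: "box_hi q k \<le> ceil_coord p k" if "k \<in> I \<inter> {k. g k = u1}" for k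
  proof (rule box_hi_le_ceil_coord_if_coord_less)
    show "coord q k < coord p k" using pos coord_diff[of p k q] that by simp
  qed
  let ?G1 = "I \<inter> {k. g k = u1}" and ?G2 = "I - {k. g k = u1}"
  let ?a = "\<Sum>k\<in>?G1. ceil_coord p k"
  have "X \<subseteq> (+) (?a *\<^sub>R u1) ` span {u2}"
  proof
    fix y assume y: "y \<in> X"
    obtain t where t: "box_coords p t y" using y X by (auto simp: tile_box_def)
    obtain t' where t': "box_coords q t' y" using y X by (auto simp: tile_box_def)
    have yt: "y = (\<Sum>k\<in>?G1. t k) *\<^sub>R u1 + (\<Sum>k\<in>?G2. t k) *\<^sub>R u2"
      using t sum_two_directions[OF u(3), of t] by (simp add: box_coords_def)
    moreover have "y = (\<Sum>k\<in>?G1. t' k) *\<^sub>R u1 + (\<Sum>k\<in>?G2. t' k) *\<^sub>R u2"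
      using t' sum_two_directions[OF u(3), of t'] by (simp add: box_coords_def)
    ultimately have "(\<Sum>k\<in>?G1. t k) = (\<Sum>k\<in>?G1. t' k)"
      by (intro coeff_eq_if_independent2[OF u(1,2), where b = "\<Sum>k\<in>?G2. t k" and b' = "\<Sum>k\<in>?G2. t' k"])
        simp
    moreover have "?a \<le> (\<Sum>k\<in>?G1. t k)" using box_coords_bounds[OF t] by (intro sum_mono) auto
    moreover have "(\<Sum>k\<in>?G1. t' k) \<le> (\<Sum>k\<in>?G1. box_hi q k)"
      using box_coords_bounds[OF t'] by (intro sum_mono) auto
    moreover have "(\<Sum>k\<in>?G1. box_hi q k) \<le> ?a" using hi_le by (intro sum_mono) auto
    ultimately have "(\<Sum>k\<in>?G1. t k) = ?a" by linarith
    thus "y \<in> (+) (?a *\<^sub>R u1) ` span {u2}" using yt by (auto intro: span_mul span_base)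
  qed
  hence "aff_dim X \<le> 1" by (rule aff_dim_le_1_if_subset_line)
  thus False using dim by simp
qed

lemma nbr_coord_eq_if_two_directions:
  assumes u: "independent {u1, u2}" "u1 \<noteq> u2" "\<forall>k\<in>I. g k = u1 \<or> g k = u2" and AB: "(A, B) \<in> nbr"
  shows "\<forall>k\<in>I. coord (tile_point A) k = coord (tile_point B) k"
proof -
  have X: "A \<inter> B \<subseteq> tile_box (tile_point A)" "A \<inter> B \<subseteq> tile_box (tile_point B)" "2 \<le> aff_dim (A \<inter> B)"
    using nbr_subset_tile_box[OF AB] AB by (auto simp: nbr_iff)
  hence X': "B \<inter> A \<subseteq> tile_box (tile_point B)" "B \<inter> A \<subseteq> tile_box (tile_point A)" "2 \<le> aff_dim (B \<inter> A)"
    by (simp_all add: Int_commute)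
  have u': "independent {u2, u1}" "u2 \<noteq> u1" "\<forall>k\<in>I. g k = u2 \<or> g k = u1" using u by (auto simp: insert_commute)
  have "(tile_point A - tile_point B) \<bullet> u1 = 0" "(tile_point A - tile_point B) \<bullet> u2 = 0"
    using inner_le_0_if_common_plane[OF u X] inner_le_0_if_common_plane[OF u X']
      inner_le_0_if_common_plane[OF u' X] inner_le_0_if_common_plane[OF u' X']
    by (simp_all add: inner_diff_left)
  hence "(tile_point A - tile_point B) \<bullet> g k = 0" if "k \<in> I" for k using u(3) that by auto
  thus ?thesis using coord_diff[of "tile_point A" _ "tile_point B"] by (metis eq_iff_diff_eq_0)
qed

lemma relpow_nbr_subset_tile_box_if_two_directions:
  assumes u: "independent {u1, u2}" "u1 \<noteq> u2" "\<forall>k\<in>I. g k = u1 \<or> g k = u2"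
    and AB: "(A, B) \<in> nbr ^^ n" and A: "A \<in> tiles"
  shows "B \<subseteq> tile_box (tile_point A)"
proof -
  have "B \<in> tiles \<and> (\<forall>k\<in>I. coord (tile_point A) k = coord (tile_point B) k)"
    using AB
  proof (induction n arbitrary: B)
    case (Suc n)
    then obtain C where C: "(A, C) \<in> nbr ^^ n" "(C, B) \<in> nbr" by auto
    thus ?case using Suc.IH[OF C(1)] nbr_coord_eq_if_two_directions[OF u C(2)] by (simp add: nbr_iff)
  qed (use A in simp)
  thus ?thesis using tile_box_cong tile_point(2) tile_subset_tile_box by metis
qed

lemma growth_vertices_if_two_directions:
  assumes u: "independent {u1, u2}" "u1 \<noteq> u2" "\<forall>k\<in>I. g k = u1 \<or> g k = u2"
  shows "growth_vertices g N = {0}"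
proof -
  have "grid_norm (g i \<times> g j) = 0" if "i \<in> I" "j \<in> I" for i j
  proof -
    have "(g i \<times> g j) \<bullet> g k = 0" if "k \<in> I" for k
      using u(3) \<open>i \<in> I\<close> \<open>j \<in> I\<close> that by (metis cross_refl dot_cross_self(1,2,4) cross_skew inner_minus_left)
    thus ?thesis by (simp add: grid_norm_def)
  qed
  hence "ball_vertices \<subseteq> {0}" unfolding ball_vertices_def by auto
  moreover have "ball_vertices \<noteq> {}" using ball_verticesI[of 1 2 1] N_ge_3 by auto
  ultimately show ?thesis
    by (simp add: growth_vertices_eq_frame_op_image linear_0[OF linear_frame_op] subset_singleton_iff)
qed

lemma growth_form_bound_if_two_directions:
  assumes "\<not> (\<exists>a\<in>I. \<exists>b\<in>I. \<exists>c\<in>I. g a \<noteq> g b \<and> g a \<noteq> g c \<and> g b \<noteq> g c)"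
    and P0: "finite P0" "P0 \<subseteq> tiles"
  shows "\<exists>x C. \<forall>n. \<forall>T\<in>coord_shell tiles P0 n. \<forall>y\<in>T.
           \<exists>z\<in>frontier (convex hull (growth_vertices g N)). dist y (x + real n *\<^sub>R z) \<le> C"
proof -
  obtain u1 u2 where u: "independent {u1, u2}" "u1 \<noteq> u2" "\<forall>k\<in>I. g k = u1 \<or> g k = u2"
    using obtain_two_directions[OF assms(1)] .
  have F: "frontier (convex hull (growth_vertices g N)) = {0}"
    using growth_vertices_if_two_directions[OF u] by (simp add: frontier_def)
  define c where "c T0 = (\<Sum>k\<in>I. coord (tile_point T0) k *\<^sub>R g k)" for T0
  define C where "C = Max ((\<lambda>T0. norm (c T0)) ` P0) + 2 * real N"
  have "norm y \<le> C" if T: "T \<in> coord_shell tiles P0 n" and y: "y \<in> T" for n T y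
  proof -
    obtain T0 where T0: "T0 \<in> P0" "(T0, T) \<in> nbr ^^ n" using coord_shellD(2)[OF T] by blast
    have "y \<in> tile_box (tile_point T0)"
      using relpow_nbr_subset_tile_box_if_two_directions[OF u T0(2)] T0(1) P0(2) y by blast
    hence "norm (y - c T0) \<le> 2 * real N" unfolding c_def by (rule tile_box_near)
    moreover have "norm y \<le> norm (c T0) + norm (y - c T0)" by (rule norm_triangle_sub)
    moreover have "norm (c T0) \<le> Max ((\<lambda>T0. norm (c T0)) ` P0)" using P0(1) T0(1) by (intro Max_ge) auto
    ultimately show ?thesis unfolding C_def by linarith
  qed
  hence "\<forall>n. \<forall>T\<in>coord_shell tiles P0 n. \<forall>y\<in>T. \<exists>z\<in>{0}. dist y (0 + real n *\<^sub>R z) \<le> C" by simp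
  thus ?thesis unfolding F by blast
qed

end

theorem theorem4:
  fixes g :: "nat \<Rightarrow> real^3" and \<gamma> :: "nat \<Rightarrow> real" and N :: nat
  assumes "N \<ge> 3"
    and "\<forall>i\<in>{1..N}. norm (g i) = 1"
    and "\<forall>i\<in>{1..N}. \<forall>j\<in>{1..N}. \<forall>k\<in>{1..N}. i \<noteq> j \<and> i \<noteq> k \<and> j \<noteq> k \<longrightarrow>
           independent {g i, g j, g k}"
    and "regular_grid g \<gamma> N"
  shows "is_growth_form (grid_tiles g \<gamma> N) (frontier (convex hull (growth_vertices g N)))"
proof -
  interpret grid3 g \<gamma> N using assms by unfold_locales
  have "\<exists>x C. \<forall>n. \<forall>T\<in>coord_shell tiles P0 n. \<forall>y\<in>T.
          \<exists>z\<in>frontier (convex hull (growth_vertices g N)). dist y (x + real n *\<^sub>R z) \<le> C"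
    if P0: "finite P0" "P0 \<noteq> {}" "P0 \<subseteq> tiles" for P0
  proof (cases "\<exists>a\<in>I. \<exists>b\<in>I. \<exists>c\<in>I. g a \<noteq> g b \<and> g a \<noteq> g c \<and> g b \<noteq> g c")
    case True
    interpret spanning_grid3 g \<gamma> N by unfold_locales (fact True)
    show ?thesis using growth_form_bound[OF P0] .
  next
    case False
    show ?thesis using growth_form_bound_if_two_directions[OF False P0(1,3)] .
  qed
  thus ?thesis unfolding is_growth_form_def using compact_growth_form by blast
qed

end
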